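(* Let $X\subseteq U$ be a fixed set of $|X|=m$ keys and let $h:U\to[n]$ be a random simple tabulation hash function. For all $t\ge0$, $$\Pr\bigl[|h(X)|\ge \mu_0+2t\bigr]=O\!\left(\exp\!\left(\frac{-t^2}{2m^{2-1/c}}\right)\right),$$ and $$\Pr\bigl[|h(X)|\le \mu_0-2t\bigr]=O\!\left(\exp\!\left(\frac{-t^2}{2m^{2-1/c}}\right)+\frac{m^2}{nt^2}\right).$$
   Context: Simple tabulation hashing: the key universe is $U=[u]$, each key $x\in U$ is viewed as a vector $(x[0],\dots,x[c-1])$ of $c=O(1)$ characters from $\Sigma=[u^{1/c}]$; the range is $[n]=[2^r]$. $h(x)=h_0(x[0])\oplus\cdots\oplus h_{c-1}(x[c-1])$ with $h_0,\dots,h_{c-1}:\Sigma\to[2^r]$ independent fully random functions and $\oplus$ bitwise XOR. $\mu_0=n(1-(1-1/n)^m)$. The constants in $O(\cdot)$ may depend on $c$ only. *)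

theory Defs
  imports Complex_Main "HOL-Library.FuncSet"
begin

text \<open>Simple tabulation hashing with c characters from the alphabet
  Sigma = {0..<s} and range [n] = {0..<2^r}.  A key is a vector of c characters,
  modelled as an extensional function {0..<c} -> Sigma.\<close>

definition keys :: "nat \<Rightarrow> nat \<Rightarrow> (nat \<Rightarrow> nat) set" where
  "keys c s = PiE {..<c} (\<lambda>_. {..<s})"

definition tab_space :: "nat \<Rightarrow> nat \<Rightarrow> nat \<Rightarrow> (nat \<Rightarrow> nat \<Rightarrow> nat) set" where
  "tab_space c s r = PiE {..<c} (\<lambda>_. PiE {..<s} (\<lambda>_. {..<2^r}))"

definition tab_hash :: "nat \<Rightarrow> (nat \<Rightarrow> nat \<Rightarrow> nat) \<Rightarrow> (nat \<Rightarrow> nat) \<Rightarrow> nat" where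
  "tab_hash c H x = foldr (\<lambda>i acc. xor (H i (x i)) acc) [0..<c] 0"

definition tab_prob :: "nat \<Rightarrow> nat \<Rightarrow> nat \<Rightarrow> ((nat \<Rightarrow> nat \<Rightarrow> nat) \<Rightarrow> bool) \<Rightarrow> real" where
  "tab_prob c s r P = real (card {H \<in> tab_space c s r. P H}) / real (card (tab_space c s r))"

definition mu0 :: "nat \<Rightarrow> nat \<Rightarrow> real" where
  "mu0 n m = real n * (1 - (1 - 1 / real n) ^ m)"

end

theory Submission
  imports Defs "HOL-Probability.Hoeffding"
begin

text \<open>The number of empty bins is controlled by a martingale argument over the table entries.
  The keys are peeled off in groups \<open>G\<close> of keys sharing a character \<open>a\<close> at some position \<open>i\<close>;
  a group of size at most \<open>m\<^sup>1\<^sup>-\<^sup>1\<^sup>/\<^sup>c\<close> always exists, since otherwise the keys would not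
  fit into the product of the character sets.  Given all other entries, the entry \<open>h\<^sub>i(a)\<close>
  moves the hash values of \<open>G\<close> by a uniformly random XOR mask and fixes those of the remaining
  keys, so by Hoeffding's lemma each group contributes \<open>(card G)\<^sup>2\<close> to the variance proxy, and
  these squares add up to at most \<open>m\<^sup>2\<^sup>-\<^sup>1\<^sup>/\<^sup>c\<close>.  A Chernoff bound gives the upper tail
  of \<open>card (h ` X)\<close>.  For the lower tail the argument loses the number of colliding pairs
  inside the groups; there are at most \<open>m\<^sup>2\<^sup>-\<^sup>1\<^sup>/\<^sup>c\<close> such pairs, their number of collisions has
  variance at most \<open>3\<^sup>c m\<^sup>2 / n\<close> because two collision events are independent unless the four
  keys pair up at every position, and Chebyshev's inequality bounds it.\<close>

lemma hoeffding_lemma_uniform: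
  fixes A :: "'a set" and f :: "'a \<Rightarrow> real" and l :: real
  assumes "finite A" "A \<noteq> {}" "\<And>x. x \<in> A \<Longrightarrow> a \<le> f x \<and> f x \<le> b" "l \<ge> 0"
  shows "(\<Sum>x\<in>A. exp (l * (f x - sum f A / card A))) / card A \<le> exp (l\<^sup>2 * (b - a)\<^sup>2 / 8)"
proof (cases "l = 0")
  case True
  then show ?thesis using assms(1,2) by simp
next
  case False
  let ?M = "measure_pmf (pmf_of_set A)"
  have bounded: "interval_bounded_random_variable ?M f a b"
    unfolding interval_bounded_random_variable_def interval_bounded_random_variable_axioms_def
    using assms by (simp add: AE_measure_pmf_iff prob_space_measure_pmf)
  have mean: "integral\<^sup>L ?M f = sum f A / card A"
    using integral_pmf_of_set[OF assms(2,1), of f] by simp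
  have "nn_integral ?M (\<lambda>x. exp (l * (f x - integral\<^sup>L ?M f))) \<le> ennreal (exp (l\<^sup>2 * (b - a)\<^sup>2 / 8))"
    by (rule interval_bounded_random_variable.Hoeffdings_lemma_nn_integral[OF bounded])
       (use assms False in auto)
  also have "nn_integral ?M (\<lambda>x. exp (l * (f x - integral\<^sup>L ?M f))) =
      (\<Sum>x\<in>A. ennreal (exp (l * (f x - sum f A / card A)))) / of_nat (card A)"
    unfolding mean nn_integral_pmf_of_set[OF assms(2,1)] by simp
  also have "\<dots> = ennreal (\<Sum>x\<in>A. exp (l * (f x - sum f A / card A))) / ennreal (card A)"
    by (subst sum_ennreal) (auto simp: ennreal_of_nat_eq_real_of_nat)
  also have "\<dots> = ennreal ((\<Sum>x\<in>A. exp (l * (f x - sum f A / card A))) / card A)"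
    by (rule divide_ennreal) (use assms in \<open>auto simp: sum_nonneg card_gt_0_iff\<close>)
  finally show ?thesis
    by (subst (asm) ennreal_le_iff) auto
qed

section \<open>Resampling one table entry\<close>

lemma finite_keys: "finite (keys c s)"
  unfolding keys_def by (intro finite_PiE) auto

lemma finite_tab_space: "finite (tab_space c s r)"
  unfolding tab_space_def by (intro finite_PiE) auto

lemma card_tab_space_pos: "card (tab_space c s r) > 0"
proof -
  have "0 \<in> {..<(2::nat) ^ r}"
    by simp
  then have "{..<(2::nat) ^ r} \<noteq> {}"
    by blast
  then have "tab_space c s r \<noteq> {}"
    by (auto simp: tab_space_def PiE_eq_empty_iff)
  then show ?thesis
    using finite_tab_space by (simp add: card_gt_0_iff)
qed

definition tab_upd :: "(nat \<Rightarrow> nat \<Rightarrow> nat) \<Rightarrow> nat \<Rightarrow> nat \<Rightarrow> nat \<Rightarrow> nat \<Rightarrow> nat \<Rightarrow> nat" where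
  "tab_upd H i a u = H(i := (H i)(a := u))"

lemma tab_upd_apply: "tab_upd H i a u j b = (if j = i \<and> b = a then u else H j b)"
  by (simp add: tab_upd_def)

lemma tab_upd_tab_upd [simp]: "tab_upd (tab_upd H i a v) i a u = tab_upd H i a u"
  by (simp add: tab_upd_def)

lemma tab_upd_in_tab_space:
  "H \<in> tab_space c s r \<Longrightarrow> i < c \<Longrightarrow> a < s \<Longrightarrow> u < 2 ^ r \<Longrightarrow> tab_upd H i a u \<in> tab_space c s r"
  unfolding tab_space_def tab_upd_def by (auto simp: PiE_iff extensional_def)

lemma tab_upd_entry: "H \<in> tab_space c s r \<Longrightarrow> tab_upd H i a (H i a) = H"
  unfolding tab_upd_def by auto

lemma tab_entry_less: "H \<in> tab_space c s r \<Longrightarrow> i < c \<Longrightarrow> a < s \<Longrightarrow> H i a < 2 ^ r"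
  unfolding tab_space_def by (auto simp: PiE_iff)

text \<open>The map \<open>(H, u) \<mapsto> (tab_upd H i a u, H i a)\<close> is an involution of
  \<open>tab_space c s r \<times> {..<2^r}\<close>.\<close>

lemma sum_tab_space_resample:
  fixes F :: "(nat \<Rightarrow> nat \<Rightarrow> nat) \<Rightarrow> real"
  assumes "i < c" "a < s"
  shows "(\<Sum>H\<in>tab_space c s r. F H) * 2 ^ r = (\<Sum>H\<in>tab_space c s r. \<Sum>u<2 ^ r. F (tab_upd H i a u))"
proof -
  let ?T = "tab_space c s r \<times> {..<(2::nat) ^ r}"
  let ?swap = "\<lambda>(H, u). (tab_upd H i a u, H i a)"
  have "?swap p \<in> ?T \<and> ?swap (?swap p) = p" if "p \<in> ?T" for p
    using that assms
    by (auto simp: tab_upd_in_tab_space tab_entry_less tab_upd_entry tab_upd_apply)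
  then have bij: "bij_betw ?swap ?T ?T"
    by (intro bij_betwI[where g = ?swap]) auto
  have "(\<Sum>H\<in>tab_space c s r. \<Sum>u<2 ^ r. F (tab_upd H i a u)) = (\<Sum>p\<in>?T. (F \<circ> fst) (?swap p))"
    by (simp add: sum.cartesian_product case_prod_beta)
  also have "\<dots> = (\<Sum>p\<in>?T. (F \<circ> fst) p)"
    by (rule sum.reindex_bij_betw[OF bij])
  also have "\<dots> = (\<Sum>(H, u)\<in>?T. F H)"
    by (simp add: case_prod_beta)
  also have "\<dots> = (\<Sum>H\<in>tab_space c s r. \<Sum>u<(2::nat) ^ r. F H)"
    by (rule sum.cartesian_product[symmetric])
  also have "\<dots> = 2 ^ r * (\<Sum>H\<in>tab_space c s r. F H)"
    by (simp add: sum_distrib_left)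
  finally show ?thesis
    by (simp add: mult.commute)
qed

lemma xor_less_power: "(a::nat) < 2 ^ r \<Longrightarrow> b < 2 ^ r \<Longrightarrow> xor a b < 2 ^ r"
  by (metis take_bit_nat_eq_self_iff take_bit_xor)

lemma inj_xor: "inj (\<lambda>z::nat. xor z u)"
proof (rule injI)
  fix x y :: nat
  assume "xor x u = xor y u"
  then have "xor (xor x u) u = xor (xor y u) u"
    by simp
  then show "x = y"
    by (simp add: xor.assoc)
qed

lemma bij_betw_xor: "(u::nat) < 2 ^ r \<Longrightarrow> bij_betw (\<lambda>z. xor z u) {..<2 ^ r} {..<2 ^ r}"
  by (rule bij_betwI[where g = "\<lambda>z. xor z u"]) (auto intro: xor_less_power simp: xor.assoc)

lemma xor_eq_0_iff: "xor (a::nat) b = 0 \<longleftrightarrow> a = b"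
  using injD[OF inj_xor, of a b b] by auto

lemma xor_eq_xor_iff: "xor (a::nat) u = xor b u \<longleftrightarrow> a = b"
  using inj_xor[of u] by (auto dest: injD)

lemma foldr_xor_less_power:
  "(\<And>j. j \<in> set L \<Longrightarrow> g j < 2 ^ r) \<Longrightarrow> foldr (\<lambda>j acc. xor (g j) acc) L 0 < (2::nat) ^ r"
  by (induction L) (auto intro: xor_less_power)

lemma foldr_xor_fun_upd:
  assumes "distinct L" "i \<in> set L"
  shows "foldr (\<lambda>j acc. xor ((g(i := w)) j) acc) L 0 =
         xor (foldr (\<lambda>j acc. xor ((g(i := 0)) j) acc) L (0::nat)) w"
  using assms
proof (induction L)
  case (Cons j L)
  show ?case
  proof (cases "j = i")
    case True
    with Cons.prems have rest: "foldr (\<lambda>j acc. xor ((g(i := v)) j) acc) L 0 =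
        foldr (\<lambda>j acc. xor (g j) acc) L 0" for v
      by (intro foldr_cong) auto
    with True show ?thesis
      by (simp add: rest fun_upd_same xor.commute del: fun_upd_apply)
  next
    case False
    with Cons show ?thesis
      by (simp add: xor.assoc)
  qed
qed simp

lemma tab_hash_less:
  "H \<in> tab_space c s r \<Longrightarrow> x \<in> keys c s \<Longrightarrow> tab_hash c H x < 2 ^ r"
  unfolding tab_hash_def
  by (rule foldr_xor_less_power) (auto simp: tab_space_def keys_def PiE_iff)

lemma tab_hash_image_subset:
  "H \<in> tab_space c s r \<Longrightarrow> X \<subseteq> keys c s \<Longrightarrow> tab_hash c H ` X \<subseteq> {..<2 ^ r}"
  using tab_hash_less by blast

lemma card_tab_hash_image_le:
  "H \<in> tab_space c s r \<Longrightarrow> X \<subseteq> keys c s \<Longrightarrow> card (tab_hash c H ` X) \<le> 2 ^ r"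
  using card_mono[OF _ tab_hash_image_subset] by fastforce

lemma tab_hash_tab_upd_other:
  "\<not> (i < c \<and> x i = a) \<Longrightarrow> tab_hash c (tab_upd H i a u) x = tab_hash c H x"
  unfolding tab_hash_def by (intro foldr_cong) (auto simp: tab_upd_apply)

lemma tab_hash_tab_upd_same:
  assumes "i < c" "x i = a"
  shows "tab_hash c (tab_upd H i a u) x = xor (tab_hash c (tab_upd H i a 0) x) u"
proof -
  have "tab_hash c (tab_upd H i a v) x = foldr (\<lambda>j acc. xor (((\<lambda>j. H j (x j))(i := v)) j) acc) [0..<c] 0"
    for v
    unfolding tab_hash_def using assms by (intro foldr_cong) (auto simp: tab_upd_apply)
  moreover have "foldr (\<lambda>j acc. xor (((\<lambda>j. H j (x j))(i := u)) j) acc) [0..<c] 0 =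
      xor (foldr (\<lambda>j acc. xor (((\<lambda>j. H j (x j))(i := 0)) j) acc) [0..<c] 0) u"
    by (rule foldr_xor_fun_upd) (use assms in auto)
  ultimately show ?thesis
    by simp
qed

section \<open>Exponential moment bounds\<close>

text \<open>\<open>tab_mgf_bound c s r Z v\<close> says \<open>E[exp (l * Z)] \<le> exp (l\<^sup>2 * v / 8)\<close> for all \<open>l \<ge> 0\<close>: the
  bound Hoeffding's lemma gives for a sum of independent increments whose ranges have
  squared lengths summing to \<open>v\<close>.\<close>

definition tab_mgf_bound ::
    "nat \<Rightarrow> nat \<Rightarrow> nat \<Rightarrow> ((nat \<Rightarrow> nat \<Rightarrow> nat) \<Rightarrow> real) \<Rightarrow> real \<Rightarrow> bool" where
  "tab_mgf_bound c s r Z v \<longleftrightarrow>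
     (\<forall>l\<ge>0. (\<Sum>H\<in>tab_space c s r. exp (l * Z H)) \<le> card (tab_space c s r) * exp (l\<^sup>2 * v / 8))"

lemma tab_mgf_bound_nonpos:
  assumes "\<And>H. H \<in> tab_space c s r \<Longrightarrow> Z H \<le> 0" "0 \<le> v"
  shows "tab_mgf_bound c s r Z v"
  unfolding tab_mgf_bound_def
proof (intro allI impI)
  fix l :: real
  assume "l \<ge> 0"
  then have "(\<Sum>H\<in>tab_space c s r. exp (l * Z H)) \<le> (\<Sum>H\<in>tab_space c s r. 1)"
    using assms(1) by (intro sum_mono) (auto simp: mult_nonneg_nonpos)
  also have "\<dots> = real (card (tab_space c s r)) * 1"
    by simp
  also have "\<dots> \<le> card (tab_space c s r) * exp (l\<^sup>2 * v / 8)"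
    using assms(2) by (intro mult_left_mono) auto
  finally show "(\<Sum>H\<in>tab_space c s r. exp (l * Z H)) \<le> card (tab_space c s r) * exp (l\<^sup>2 * v / 8)" .
qed

lemma tab_mgf_bound_mono:
  assumes "tab_mgf_bound c s r Z v" "v \<le> v'"
  shows "tab_mgf_bound c s r Z v'"
  unfolding tab_mgf_bound_def
proof (intro allI impI)
  fix l :: real
  assume "l \<ge> 0"
  then have "(\<Sum>H\<in>tab_space c s r. exp (l * Z H)) \<le> card (tab_space c s r) * exp (l\<^sup>2 * v / 8)"
    using assms(1) by (simp add: tab_mgf_bound_def)
  also have "\<dots> \<le> card (tab_space c s r) * exp (l\<^sup>2 * v' / 8)"
    using assms(2) by (intro mult_left_mono exp_mono divide_right_mono mult_left_mono) auto
  finally show "(\<Sum>H\<in>tab_space c s r. exp (l * Z H)) \<le> card (tab_space c s r) * exp (l\<^sup>2 * v' / 8)" .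
qed

text \<open>Hoeffding's lemma applied conditionally on all entries but \<open>H i a\<close>: a factor \<open>F\<close> that
  does not depend on that entry can be pulled out of the average over it.\<close>

lemma sum_exp_centred_resample_le:
  fixes F Y :: "(nat \<Rightarrow> nat \<Rightarrow> nat) \<Rightarrow> real"
  assumes ia: "i < c" "a < s" and "0 \<le> l" and F: "\<And>H. 0 \<le> F H"
    and inv: "\<And>H u. H \<in> tab_space c s r \<Longrightarrow> u < 2 ^ r \<Longrightarrow> F (tab_upd H i a u) = F H"
    and range: "\<And>H. H \<in> tab_space c s r \<Longrightarrow> 0 \<le> Y H \<and> Y H \<le> k"
  shows "(\<Sum>H\<in>tab_space c s r. F H * exp (l * (Y H - (\<Sum>u<2 ^ r. Y (tab_upd H i a u)) / 2 ^ r)))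
    \<le> exp (l\<^sup>2 * k\<^sup>2 / 8) * (\<Sum>H\<in>tab_space c s r. F H)"
proof -
  let ?T = "tab_space c s r"
  let ?n = "(2::nat) ^ r"
  define EY where "EY H = (\<Sum>u<?n. Y (tab_upd H i a u)) / ?n" for H
  have EY_upd: "EY (tab_upd H i a u) = EY H" for H u
    by (simp add: EY_def)
  have "(\<Sum>H\<in>?T. F H * exp (l * (Y H - EY H))) =
      (\<Sum>H\<in>?T. \<Sum>u<?n. F (tab_upd H i a u) * exp (l * (Y (tab_upd H i a u) - EY (tab_upd H i a u)))) / ?n"
    using sum_tab_space_resample[OF ia, of "\<lambda>H. F H * exp (l * (Y H - EY H))" r]
    by (simp add: field_simps)
  also have "\<dots> = (\<Sum>H\<in>?T. F H * ((\<Sum>u<?n. exp (l * (Y (tab_upd H i a u) - EY H))) / ?n))"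
    by (auto simp: inv EY_upd sum_distrib_left sum_divide_distrib intro!: sum.cong)
  also have "\<dots> \<le> (\<Sum>H\<in>?T. F H * exp (l\<^sup>2 * (k - 0)\<^sup>2 / 8))"
  proof (intro sum_mono mult_left_mono F)
    fix H
    assume H: "H \<in> ?T"
    have "(\<Sum>u\<in>{..<?n}. exp (l * (Y (tab_upd H i a u) -
              (\<Sum>u\<in>{..<?n}. Y (tab_upd H i a u)) / card {..<?n}))) / card {..<?n}
          \<le> exp (l\<^sup>2 * (k - 0)\<^sup>2 / 8)"
      using range tab_upd_in_tab_space[OF H ia] \<open>0 \<le> l\<close>
      by (intro hoeffding_lemma_uniform) (auto simp: lessThan_empty_iff)
    then show "(\<Sum>u<?n. exp (l * (Y (tab_upd H i a u) - EY H))) / ?n \<le> exp (l\<^sup>2 * (k - 0)\<^sup>2 / 8)"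
      by (simp add: EY_def)
  qed
  finally show ?thesis
    by (simp add: EY_def sum_distrib_right mult.commute)
qed

text \<open>One martingale step: conditionally on all entries but \<open>H i a\<close>, the increment \<open>Y\<close> has range
  \<open>k\<close>, which adds \<open>k\<^sup>2\<close> to the variance proxy.\<close>

lemma tab_mgf_bound_resample_step:
  fixes Z Z' Y :: "(nat \<Rightarrow> nat \<Rightarrow> nat) \<Rightarrow> real"
  assumes ia: "i < c" "a < s" and w: "0 \<le> w" "w \<le> 1" and "0 \<le> v"
    and mgf: "tab_mgf_bound c s r Z' v"
    and inv: "\<And>H u. H \<in> tab_space c s r \<Longrightarrow> u < 2 ^ r \<Longrightarrow> Z' (tab_upd H i a u) = Z' H"
    and bound: "\<And>H. H \<in> tab_space c s r \<Longrightarrow>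
        Z H \<le> w * Z' H + (Y H - (\<Sum>u<2 ^ r. Y (tab_upd H i a u)) / 2 ^ r)"
    and range: "\<And>H. H \<in> tab_space c s r \<Longrightarrow> 0 \<le> Y H \<and> Y H \<le> k"
  shows "tab_mgf_bound c s r Z (k\<^sup>2 + v)"
  unfolding tab_mgf_bound_def
proof (intro allI impI)
  fix l :: real
  assume l: "l \<ge> 0"
  let ?T = "tab_space c s r"
  let ?Y = "\<lambda>H. Y H - (\<Sum>u<2 ^ r. Y (tab_upd H i a u)) / 2 ^ r"
  have "(\<Sum>H\<in>?T. exp (l * Z H)) \<le> (\<Sum>H\<in>?T. exp ((l * w) * Z' H) * exp (l * ?Y H))"
  proof (rule sum_mono)
    fix H
    assume H: "H \<in> ?T"
    have "l * Z H \<le> (l * w) * Z' H + l * ?Y H"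
      using mult_left_mono[OF bound[OF H] l] by (simp add: algebra_simps)
    then show "exp (l * Z H) \<le> exp ((l * w) * Z' H) * exp (l * ?Y H)"
      by (simp flip: exp_add)
  qed
  also have "\<dots> \<le> exp (l\<^sup>2 * k\<^sup>2 / 8) * (\<Sum>H\<in>?T. exp ((l * w) * Z' H))"
    using inv by (intro sum_exp_centred_resample_le[OF ia l _ _ range]) auto
  also have "\<dots> \<le> exp (l\<^sup>2 * k\<^sup>2 / 8) * (card ?T * exp ((l * w)\<^sup>2 * v / 8))"
    using mgf l w by (intro mult_left_mono) (auto simp: tab_mgf_bound_def)
  also have "\<dots> \<le> exp (l\<^sup>2 * k\<^sup>2 / 8) * (card ?T * exp (l\<^sup>2 * v / 8))"
  proof -
    have "(l * w)\<^sup>2 \<le> l\<^sup>2"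
      using w l by (simp add: power_mult_distrib mult_left_le power_le_one)
    then show ?thesis
      using \<open>0 \<le> v\<close> by (intro mult_left_mono exp_mono divide_right_mono mult_right_mono) auto
  qed
  also have "\<dots> = card ?T * exp (l\<^sup>2 * (k\<^sup>2 + v) / 8)"
    by (simp add: algebra_simps add_divide_distrib flip: exp_add)
  finally show "(\<Sum>H\<in>?T. exp (l * Z H)) \<le> card ?T * exp (l\<^sup>2 * (k\<^sup>2 + v) / 8)" .
qed

lemma tab_prob_ge_le_exp:
  assumes "tab_mgf_bound c s r Z v" "0 < v" "0 \<le> t"
  shows "tab_prob c s r (\<lambda>H. t \<le> Z H) \<le> exp (- 2 * t\<^sup>2 / v)"
proof -
  let ?T = "tab_space c s r"
  define l where "l = 4 * t / v"
  have l: "l \<ge> 0"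
    using assms by (simp add: l_def)
  have "card {H\<in>?T. t \<le> Z H} * exp (l * t) = (\<Sum>H\<in>{H\<in>?T. t \<le> Z H}. exp (l * t))"
    by simp
  also have "\<dots> \<le> (\<Sum>H\<in>{H\<in>?T. t \<le> Z H}. exp (l * Z H))"
    using l by (intro sum_mono) (auto intro: mult_left_mono)
  also have "\<dots> \<le> (\<Sum>H\<in>?T. exp (l * Z H))"
    by (intro sum_mono2 finite_tab_space) auto
  also have "\<dots> \<le> card ?T * exp (l\<^sup>2 * v / 8)"
    using assms(1) l by (simp add: tab_mgf_bound_def)
  finally have "card {H\<in>?T. t \<le> Z H} / card ?T \<le> exp (l\<^sup>2 * v / 8) / exp (l * t)"
    using card_tab_space_pos[of c s r] by (simp add: field_simps)
  also have "\<dots> = exp (- 2 * t\<^sup>2 / v)"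
    using assms(2) by (simp add: l_def power2_eq_square field_simps flip: exp_diff)
  finally show ?thesis
    by (simp add: tab_prob_def)
qed

section \<open>Splitting off a small character group\<close>

text \<open>If every character occurring at position \<open>i\<close> were shared by more than \<open>m\<^sup>1\<^sup>-\<^sup>1\<^sup>/\<^sup>c\<close> keys,
  fewer than \<open>m\<^sup>1\<^sup>/\<^sup>c\<close> characters would occur at each position, and the \<open>m\<close> keys would not fit
  into the product of these character sets.\<close>

lemma exists_small_char_group:
  assumes c: "c \<ge> 1" and X: "X \<subseteq> keys c s" "X \<noteq> {}"
  obtains i a where "i < c" "a < s" "{y\<in>X. y i = a} \<noteq> {}"
    "card {y\<in>X. y i = a} \<le> card X powr (1 - 1 / c)"
proof -
  have finX: "finite X"
    using X finite_keys finite_subset by blast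
  define m where "m = real (card X)"
  have m: "m > 0"
    using X finX by (simp add: m_def card_gt_0_iff)
  have "\<exists>i<c. \<exists>x\<in>X. card {y\<in>X. y i = x i} \<le> m powr (1 - 1 / c)"
  proof (rule ccontr)
    assume "\<not> ?thesis"
    then have big: "m powr (1 - 1 / c) < card {y\<in>X. y i = x i}" if "i < c" "x \<in> X" for i x
      using that by force
    define C where "C i = (\<lambda>x. x i) ` X" for i
    have few: "card (C i) < m powr (1 / c)" if i: "i < c" for i
    proof -
      have finC: "finite (C i)" "C i \<noteq> {}"
        using X finX by (auto simp: C_def)
      have "card X = card (\<Union>b\<in>C i. {y\<in>X. y i = b})"
        by (rule arg_cong[where f = card]) (auto simp: C_def)
      also have "\<dots> = (\<Sum>b\<in>C i. card {y\<in>X. y i = b})"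
        by (rule card_UN_disjoint) (use finX finC in auto)
      finally have "m = (\<Sum>b\<in>C i. real (card {y\<in>X. y i = b}))"
        by (simp add: m_def)
      also have "\<dots> > (\<Sum>b\<in>C i. m powr (1 - 1 / c))"
        by (rule sum_strict_mono[OF finC]) (use big i in \<open>auto simp: C_def\<close>)
      finally have "card (C i) * m powr (1 - 1 / c) < m powr 1"
        using m by simp
      then show ?thesis
        using m by (simp add: powr_diff field_simps)
    qed
    have "m \<le> card (PiE {..<c} C)"
      unfolding m_def using X finX
      by (intro of_nat_mono card_mono) (auto simp: C_def keys_def PiE_iff intro!: finite_PiE)
    also have "\<dots> = (\<Prod>i<c. real (card (C i)))"
      by (simp add: card_PiE)
    also have "\<dots> < (\<Prod>i<c. m powr (1 / c))"
      by (rule prod_mono_strict[of 0]) (use c few in \<open>auto intro: less_imp_le\<close>)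
    also have "\<dots> = m"
      using m c by (simp add: powr_realpow[symmetric] powr_powr)
    finally show False
      by simp
  qed
  then obtain i x where "i < c" "x \<in> X" "card {y\<in>X. y i = x i} \<le> card X powr (1 - 1 / c)"
    by (auto simp: m_def)
  moreover have "x i < s"
    using \<open>i < c\<close> \<open>x \<in> X\<close> X by (auto simp: keys_def PiE_iff)
  ultimately show ?thesis
    using that by blast
qed

lemma sq_add_powr_le:
  fixes k m e :: real
  assumes "0 \<le> k" "0 \<le> m" "0 \<le> e" "k \<le> (m + k) powr e"
  shows "k\<^sup>2 + m powr (1 + e) \<le> (m + k) powr (1 + e)"
proof -
  have expand: "x powr (1 + e) = x * x powr e" if "x \<ge> 0" for x :: real
    using that by (cases "x = 0") (simp_all add: powr_add)
  have "m powr e \<le> (m + k) powr e"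
    using assms by (intro powr_mono2) auto
  then have "m powr (1 + e) \<le> m * (m + k) powr e"
    using assms(2) by (simp add: expand mult_left_mono)
  moreover have "k\<^sup>2 \<le> k * (m + k) powr e"
    using assms(1,4) by (simp add: power2_eq_square mult_left_mono)
  moreover have "(m + k) powr (1 + e) = m * (m + k) powr e + k * (m + k) powr e"
    using assms(1,2) by (simp add: expand distrib_right)
  ultimately show ?thesis
    by linarith
qed

text \<open>The budget inequality makes the squared ranges \<open>k\<^sup>2\<close> of the successively peeled groups
  add up to at most \<open>m\<^sup>2\<^sup>-\<^sup>1\<^sup>/\<^sup>c\<close>.\<close>

lemma small_char_group_split:
  assumes "c \<ge> 1" "X \<subseteq> keys c s" "X \<noteq> {}"
  obtains i a G Y where "i < c" "a < s" "X = Y \<union> G"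
    "G \<subseteq> keys c s" "\<forall>y\<in>G. y i = a" "Y \<subseteq> keys c s" "\<forall>y\<in>Y. y i \<noteq> a"
    "card X = card Y + card G" "card Y < card X"
    "(real (card G))\<^sup>2 + real (card Y) powr (2 - 1 / c) \<le> real (card X) powr (2 - 1 / c)"
proof -
  obtain i a where ia: "i < c" "a < s" and ne: "{y\<in>X. y i = a} \<noteq> {}"
    and small: "card {y\<in>X. y i = a} \<le> card X powr (1 - 1 / c)"
    using exists_small_char_group[OF assms] .
  define G where "G = {y\<in>X. y i = a}"
  define Y where "Y = {y\<in>X. y i \<noteq> a}"
  have "finite X"
    using assms finite_keys finite_subset by blast
  then have X: "X = Y \<union> G" "G \<subseteq> keys c s" "Y \<subseteq> keys c s" "finite G" "finite Y"
    using assms(2) by (auto simp: G_def Y_def)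
  have split: "card X = card Y + card G"
    unfolding X(1) using X(5,4) by (rule card_Un_disjoint) (auto simp: G_def Y_def)
  have "card G > 0"
    using ne X(4) by (simp add: G_def card_gt_0_iff)
  have "real (card G) \<le> (real (card Y) + real (card G)) powr (1 - 1 / c)"
    using small[folded G_def] split by simp
  then have "(real (card G))\<^sup>2 + real (card Y) powr (1 + (1 - 1 / c))
      \<le> (real (card Y) + real (card G)) powr (1 + (1 - 1 / c))"
    using assms(1) by (intro sq_add_powr_le) auto
  moreover have "1 + (1 - 1 / real c) = 2 - 1 / c"
    by simp
  ultimately have budget: "(real (card G))\<^sup>2 + real (card Y) powr (2 - 1 / c) \<le> real (card X) powr (2 - 1 / c)"
    using split by simp
  have "card Y < card X"
    using split \<open>card G > 0\<close> by simp
  moreover have "\<forall>y\<in>G. y i = a" "\<forall>y\<in>Y. y i \<noteq> a"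
    by (simp_all add: G_def Y_def)
  ultimately show ?thesis
    using that[OF ia X(1,2) _ X(3) _ split _ budget] by blast
qed

definition empty_bins :: "nat \<Rightarrow> nat \<Rightarrow> (nat \<Rightarrow> nat \<Rightarrow> nat) \<Rightarrow> (nat \<Rightarrow> nat) set \<Rightarrow> real" where
  "empty_bins c r H X = 2 ^ r - real (card (tab_hash c H ` X))"

lemma empty_bins_nonneg:
  assumes "H \<in> tab_space c s r" "X \<subseteq> keys c s"
  shows "0 \<le> empty_bins c r H X"
proof -
  have "real (card (tab_hash c H ` X)) \<le> real (2 ^ r)"
    using card_tab_hash_image_le[OF assms] by (simp only: of_nat_le_iff)
  then show ?thesis
    by (simp add: empty_bins_def)
qed

lemma card_image_diff_le: "finite G \<Longrightarrow> card (f ` G - B) \<le> card G"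
  by (meson Diff_subset card_image_le card_mono finite_imageI order_trans)

lemma empty_bins_Un:
  assumes "finite Y" "finite G"
  shows "empty_bins c r H (Y \<union> G) = empty_bins c r H Y - card (tab_hash c H ` G - tab_hash c H ` Y)"
proof -
  have "card (tab_hash c H ` (Y \<union> G)) = card (tab_hash c H ` Y \<union> (tab_hash c H ` G - tab_hash c H ` Y))"
    by (rule arg_cong[where f = card]) auto
  also have "\<dots> = card (tab_hash c H ` Y) + card (tab_hash c H ` G - tab_hash c H ` Y)"
    by (rule card_Un_disjoint) (use assms in auto)
  finally show ?thesis
    by (simp add: empty_bins_def)
qed

lemma tab_hash_image_tab_upd_other:
  assumes "\<forall>y\<in>Y. y i \<noteq> a"
  shows "tab_hash c (tab_upd H i a u) ` Y = tab_hash c H ` Y"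
  using assms by (intro image_cong refl tab_hash_tab_upd_other) auto

lemma tab_hash_image_tab_upd_same:
  assumes "i < c" "\<forall>y\<in>G. y i = a"
  shows "tab_hash c (tab_upd H i a u) ` G = (\<lambda>z. xor z u) ` tab_hash c (tab_upd H i a 0) ` G"
  unfolding image_image using assms by (intro image_cong refl tab_hash_tab_upd_same) auto

lemma sum_card_xor_image_diff:
  assumes "S \<subseteq> {..<(2::nat) ^ r}" "B \<subseteq> {..<2 ^ r}"
  shows "(\<Sum>u<(2::nat) ^ r. card ((\<lambda>z. xor z u) ` S - B)) = card S * (2 ^ r - card B)"
proof -
  let ?n = "(2::nat) ^ r"
  have finS: "finite S"
    using assms finite_subset by blast
  have "card ((\<lambda>z. xor z u) ` S - B) = (\<Sum>z\<in>S. if xor z u \<notin> B then 1 else 0)" for u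
  proof -
    have "(\<lambda>z. xor z u) ` S - B = (\<lambda>z. xor z u) ` {z\<in>S. xor z u \<notin> B}"
      by auto
    then have "card ((\<lambda>z. xor z u) ` S - B) = card {z\<in>S. xor z u \<notin> B}"
      using card_image[OF inj_on_subset[OF inj_xor]] by simp
    then show ?thesis
      using finS by (simp add: sum.If_cases Int_def)
  qed
  then have "(\<Sum>u<?n. card ((\<lambda>z. xor z u) ` S - B)) = (\<Sum>z\<in>S. \<Sum>u<?n. if xor z u \<notin> B then 1 else 0)"
    by (simp add: sum.swap[of _ S])
  also have "\<dots> = (\<Sum>z\<in>S. ?n - card B)"
  proof (rule sum.cong)
    fix z
    assume "z \<in> S"
    then have bij: "bij_betw (\<lambda>u. xor u z) {..<?n} {..<?n}"
      using assms by (intro bij_betw_xor) auto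
    have "(\<Sum>u<?n. if xor z u \<notin> B then 1 else 0) = card {u\<in>{..<?n}. xor u z \<notin> B}"
      by (simp add: sum.If_cases xor.commute Int_def)
    also have "\<dots> = card ((\<lambda>u. xor u z) ` {u\<in>{..<?n}. xor u z \<notin> B})"
      by (rule card_image[symmetric], rule inj_on_subset[OF inj_xor]) auto
    also have "(\<lambda>u. xor u z) ` {u\<in>{..<?n}. xor u z \<notin> B} = {..<?n} - B"
      using bij unfolding bij_betw_def by auto
    also have "card ({..<?n} - B) = ?n - card B"
      using assms by (simp add: card_Diff_subset finite_subset)
    finally show "(\<Sum>u<?n. if xor z u \<notin> B then 1 else 0) = ?n - card B" .
  qed simp
  finally show ?thesis
    by simp
qed

text \<open>Resampling \<open>H i a\<close> moves the hash values of the keys \<open>G\<close> using \<open>a\<close> at position \<open>i\<close> by a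
  uniformly random XOR mask and leaves those of \<open>Y\<close> unchanged.\<close>

lemma average_new_bins_resample:
  assumes H: "H \<in> tab_space c s r" and ia: "i < c" "a < s"
    and G: "G \<subseteq> keys c s" "\<forall>y\<in>G. y i = a" and Y: "Y \<subseteq> keys c s" "\<forall>y\<in>Y. y i \<noteq> a"
  shows "(\<Sum>u<2 ^ r. real (card (tab_hash c (tab_upd H i a u) ` G - tab_hash c (tab_upd H i a u) ` Y))) / 2 ^ r
    = card (tab_hash c H ` G) * empty_bins c r H Y / 2 ^ r"
proof -
  define S where "S = tab_hash c (tab_upd H i a 0) ` G"
  have S: "S \<subseteq> {..<2 ^ r}"
    unfolding S_def using H ia G by (intro tab_hash_image_subset tab_upd_in_tab_space) auto
  have shift: "tab_hash c (tab_upd H i a u) ` G = (\<lambda>z. xor z u) ` S" for u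
    unfolding S_def by (rule tab_hash_image_tab_upd_same) (use ia G in auto)
  have "card (tab_hash c H ` G) = card ((\<lambda>z. xor z (H i a)) ` S)"
    using shift[of "H i a"] by (simp add: tab_upd_entry[OF H])
  also have "\<dots> = card S"
    by (rule card_image[OF inj_on_subset[OF inj_xor]]) simp
  finally have "card (tab_hash c H ` G) = card S" .
  then have "(\<Sum>u<(2::nat) ^ r. card (tab_hash c (tab_upd H i a u) ` G - tab_hash c (tab_upd H i a u) ` Y))
    = card (tab_hash c H ` G) * (2 ^ r - card (tab_hash c H ` Y))"
    using sum_card_xor_image_diff[OF S tab_hash_image_subset[OF H Y(1)]]
    by (simp add: shift tab_hash_image_tab_upd_other[OF Y(2)])
  then have "(\<Sum>u<(2::nat) ^ r. real (card (tab_hash c (tab_upd H i a u) ` G - tab_hash c (tab_upd H i a u) ` Y)))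
    = card (tab_hash c H ` G) * (2 ^ r - real (card (tab_hash c H ` Y)))"
    using card_tab_hash_image_le[OF H Y(1)] by (simp add: of_nat_diff flip: of_nat_sum)
  then show ?thesis
    by (simp add: empty_bins_def)
qed

section \<open>Concentration of the number of empty bins\<close>

lemma power_one_minus_approx:
  fixes x :: real
  assumes "0 \<le> x" "x \<le> 1"
  shows "max 0 (1 - k * x) \<le> (1 - x) ^ k" "(1 - x) ^ k - max 0 (1 - k * x) \<le> (k * x)\<^sup>2"
proof -
  have bernoulli: "1 - j * x \<le> (1 - x) ^ j" for j :: nat
    using Bernoulli_inequality[of "- x" j] assms by simp
  then show "max 0 (1 - k * x) \<le> (1 - x) ^ k"
    using assms by simp
  have second_order: "(1 - x) ^ k \<le> 1 - k * x + (k * x)\<^sup>2"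
  proof (induction k)
    case (Suc k)
    have "x * (1 - (1 - x) ^ k) \<le> x * (k * x)"
      using bernoulli[of k] assms by (intro mult_left_mono) auto
    then have "(1 - x) ^ Suc k \<le> 1 - k * x + (k * x)\<^sup>2 - x + x * (k * x)"
      using Suc.IH by (simp add: algebra_simps)
    also have "\<dots> \<le> 1 - Suc k * x + (Suc k * x)\<^sup>2"
      using assms by (simp add: algebra_simps power2_eq_square)
    finally show ?case .
  qed simp
  show "(1 - x) ^ k - max 0 (1 - k * x) \<le> (k * x)\<^sup>2"
  proof (cases "0 \<le> 1 - k * x")
    case True
    with second_order show ?thesis
      by simp
  next
    case False
    then have "1 \<le> (k * x)\<^sup>2"
      using one_le_power[of "k * x" 2] by simp
    moreover have "(1 - x) ^ k \<le> 1"
      using assms by (simp add: power_le_one)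
    moreover have "max 0 (1 - k * x) = 0"
      using False by simp
    ultimately show ?thesis
      by linarith
  qed
qed

lemma prod_diff_le_sum_diff:
  fixes a b A B :: real
  assumes "0 \<le> a" "a \<le> A" "A \<le> 1" "0 \<le> b" "b \<le> B" "B \<le> 1"
  shows "A * B - a * b \<le> (A - a) + (B - b)"
proof -
  have "A * B - a * b = B * (A - a) + a * (B - b)"
    by (simp add: algebra_simps)
  also have "\<dots> \<le> (A - a) + (B - b)"
    using assms by (intro add_mono mult_left_le_one_le) auto
  finally show ?thesis .
qed

text \<open>Each of the \<open>card (h ` G)\<close> bins of \<open>G\<close> falls into an empty bin of \<open>Y\<close> with probability
  \<open>empty_bins / 2^r\<close> (\<open>average_new_bins_resample\<close>), so the empty bins shrink in expectation
  by the factor \<open>1 - card (h ` G) / 2^r \<ge> max 0 (1 - card G / 2^r)\<close>.\<close>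

lemma empty_bins_lower_mgf_step:
  fixes p v :: real
  assumes ia: "i < c" "a < s" and G: "G \<subseteq> keys c s" "\<forall>y\<in>G. y i = a"
    and Y: "Y \<subseteq> keys c s" "\<forall>y\<in>Y. y i \<noteq> a" and "0 \<le> v"
    and mgf: "tab_mgf_bound c s r (\<lambda>H. 2 ^ r * p - empty_bins c r H Y) v"
  shows "tab_mgf_bound c s r (\<lambda>H. 2 ^ r * (p * max 0 (1 - card G / 2 ^ r)) - empty_bins c r H (Y \<union> G))
    ((real (card G))\<^sup>2 + v)"
proof -
  let ?n = "(2::real) ^ r"
  define w where "w = max 0 (1 - card G / ?n)"
  define Z where "Z H = real (card (tab_hash c H ` G - tab_hash c H ` Y))" for H
  have fin: "finite G" "finite Y"
    using G Y finite_keys finite_subset by blast+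
  have w: "0 \<le> w" "w \<le> 1"
    by (simp_all add: w_def)
  show ?thesis
    unfolding w_def[symmetric]
  proof (rule tab_mgf_bound_resample_step[OF ia w \<open>0 \<le> v\<close> mgf, where Y = Z])
    fix H u
    show "?n * p - empty_bins c r (tab_upd H i a u) Y = ?n * p - empty_bins c r H Y"
      using Y(2) by (simp add: empty_bins_def tab_hash_image_tab_upd_other)
  next
    fix H
    assume H: "H \<in> tab_space c s r"
    let ?sG = "real (card (tab_hash c H ` G))"
    have "card (tab_hash c H ` G - tab_hash c H ` Y) \<le> card G"
      using fin(1) by (rule card_image_diff_le)
    then show "0 \<le> Z H \<and> Z H \<le> real (card G)"
      by (simp add: Z_def)
    have "card (tab_hash c H ` G) \<le> card G" "card (tab_hash c H ` G) \<le> 2 ^ r"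
      using card_image_le[OF fin(1)] card_tab_hash_image_le[OF H G(1)] by auto
    then have "?sG \<le> card G" "?sG \<le> ?n"
      by (metis of_nat_le_iff of_nat_numeral of_nat_power)+
    moreover have "1 - w = min 1 (card G / ?n)"
      by (auto simp: w_def min_def max_def)
    ultimately have "?sG / ?n \<le> 1 - w"
      by (simp add: divide_right_mono)
    then have "?sG * empty_bins c r H Y / ?n \<le> (1 - w) * empty_bins c r H Y"
      using mult_right_mono[OF _ empty_bins_nonneg[OF H Y(1)]] by (metis times_divide_eq_left)
    moreover have "empty_bins c r H (Y \<union> G) = empty_bins c r H Y - Z H"
      unfolding Z_def by (rule empty_bins_Un[OF fin(2,1)])
    moreover have "(\<Sum>u<2 ^ r. Z (tab_upd H i a u)) / 2 ^ r = ?sG * empty_bins c r H Y / ?n"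
      unfolding Z_def by (rule average_new_bins_resample[OF H ia G Y])
    ultimately show "?n * (p * w) - empty_bins c r H (Y \<union> G) \<le>
        w * (?n * p - empty_bins c r H Y) + (Z H - (\<Sum>u<2 ^ r. Z (tab_upd H i a u)) / 2 ^ r)"
      by (simp add: algebra_simps)
  qed
qed

text \<open>The number
  \<open>2^r * p\<close> tracks a lower bound for the expected number of empty bins; replacing the exact
  shrinking factor \<open>(1 - 1 / 2^r)^k\<close> by \<open>max 0 (1 - k / 2^r)\<close> costs at most \<open>k\<^sup>2 / 2^r\<close> per step.\<close>

lemma empty_bins_lower_mgf:
  assumes "c \<ge> 1"
  shows "X \<subseteq> keys c s \<Longrightarrow> \<exists>p. 0 \<le> p \<and> p \<le> (1 - 1 / 2 ^ r) ^ card X \<and>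
     2 ^ r * ((1 - 1 / 2 ^ r) ^ card X - p) \<le> card X powr (2 - 1 / c) / 2 ^ r \<and>
     tab_mgf_bound c s r (\<lambda>H. 2 ^ r * p - empty_bins c r H X) (card X powr (2 - 1 / c))"
proof (induction "card X" arbitrary: X rule: less_induct)
  case less
  let ?n = "(2::real) ^ r"
  let ?q = "1 - 1 / ?n"
  let ?b = "2 - 1 / real c"
  show ?case
  proof (cases "X = {}")
    case True
    have "tab_mgf_bound c s r (\<lambda>H. ?n * 1 - empty_bins c r H X) (card X powr ?b)"
      by (rule tab_mgf_bound_nonpos) (simp_all add: True empty_bins_def)
    then show ?thesis
      using True by (intro exI[of _ 1]) simp
  next
    case False
    obtain i a G Y where ia: "i < c" "a < s" and X: "X = Y \<union> G"
      and G: "G \<subseteq> keys c s" "\<forall>y\<in>G. y i = a" and Y: "Y \<subseteq> keys c s" "\<forall>y\<in>Y. y i \<noteq> a"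
      and card_X: "card X = card Y + card G" and smaller: "card Y < card X"
      and budget: "(real (card G))\<^sup>2 + real (card Y) powr ?b \<le> real (card X) powr ?b"
      using small_char_group_split[OF assms less.prems False] .
    obtain p where p: "0 \<le> p" "p \<le> ?q ^ card Y"
      and bias: "?n * (?q ^ card Y - p) \<le> card Y powr ?b / ?n"
      and mgf: "tab_mgf_bound c s r (\<lambda>H. ?n * p - empty_bins c r H Y) (card Y powr ?b)"
      using less.hyps[OF smaller Y(1)] by blast
    define w where "w = max 0 (1 - card G / ?n)"
    have q: "0 \<le> ?q" "?q \<le> 1"
      by (simp_all add: field_simps)
    have w: "0 \<le> w" "w \<le> ?q ^ card G" "?q ^ card G - w \<le> (card G)\<^sup>2 / ?n\<^sup>2"
      using power_one_minus_approx[of "1 / ?n" "card G"] by (simp_all add: w_def power_divide)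
    have "p * w \<le> ?q ^ card X"
      unfolding card_X power_add using w p q by (intro mult_mono) simp_all
    moreover have "?n * (?q ^ card X - p * w) \<le> card X powr ?b / ?n"
    proof -
      have "?q ^ card X - p * w \<le> (?q ^ card Y - p) + (?q ^ card G - w)"
        unfolding card_X power_add using p w q by (intro prod_diff_le_sum_diff) (auto simp: power_le_one)
      then have "?n * (?q ^ card X - p * w) \<le> ?n * (?q ^ card Y - p) + ?n * (?q ^ card G - w)"
        by (simp add: distrib_left[symmetric])
      also have "\<dots> \<le> card Y powr ?b / ?n + ?n * ((card G)\<^sup>2 / ?n\<^sup>2)"
        using bias w by (intro add_mono mult_left_mono) auto
      also have "\<dots> = ((real (card G))\<^sup>2 + card Y powr ?b) / ?n"
        by (simp add: power2_eq_square field_simps)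
      also have "\<dots> \<le> card X powr ?b / ?n"
        using budget by (intro divide_right_mono) auto
      finally show ?thesis .
    qed
    moreover have "tab_mgf_bound c s r (\<lambda>H. ?n * (p * w) - empty_bins c r H X)
        ((real (card G))\<^sup>2 + card Y powr ?b)"
      unfolding w_def X by (rule empty_bins_lower_mgf_step[OF ia G Y _ mgf]) simp
    then have "tab_mgf_bound c s r (\<lambda>H. ?n * (p * w) - empty_bins c r H X) (card X powr ?b)"
      by (rule tab_mgf_bound_mono[OF _ budget])
    ultimately show ?thesis
      using p w by (intro exI[of _ "p * w"]) simp
  qed
qed

lemma card_le_card_image_add_collisions:
  assumes "finite A"
  shows "card A \<le> card (f ` A) + card {(x, y) \<in> A \<times> A. x \<noteq> y \<and> f x = f y}"
  using assms
proof (induction A rule: finite_induct)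
  case (insert x A)
  let ?P = "\<lambda>A. {(x, y) \<in> A \<times> A. x \<noteq> y \<and> f x = f y}"
  have fin: "finite (?P (insert x A))"
    by (rule finite_subset[of _ "insert x A \<times> insert x A"]) (use insert in auto)
  have sub: "?P A \<subseteq> ?P (insert x A)"
    by auto
  show ?case
  proof (cases "f x \<in> f ` A")
    case True
    then obtain y where "y \<in> A" "f y = f x"
      by auto
    then have "(x, y) \<in> ?P (insert x A)" "(x, y) \<notin> ?P A"
      using insert by auto
    then have "card (?P A) < card (?P (insert x A))"
      using sub fin by (intro psubset_card_mono) auto
    with True insert show ?thesis
      by (simp add: insert_absorb)
  next
    case False
    with insert card_mono[OF fin sub] show ?thesis
      by simp
  qed
qed simp

definition collisions ::
    "nat \<Rightarrow> (nat \<Rightarrow> nat \<Rightarrow> nat) \<Rightarrow> ((nat \<Rightarrow> nat) \<times> (nat \<Rightarrow> nat)) set \<Rightarrow> real" where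
  "collisions c H P = card {p\<in>P. tab_hash c H (fst p) = tab_hash c H (snd p)}"

lemma collisions_nonneg: "0 \<le> collisions c H P"
  by (simp add: collisions_def)

lemma collisions_Un:
  assumes "finite P" "finite Q" "P \<inter> Q = {}"
  shows "collisions c H (P \<union> Q) = collisions c H P + collisions c H Q"
proof -
  let ?C = "\<lambda>P. {p\<in>P. tab_hash c H (fst p) = tab_hash c H (snd p)}"
  have "?C (P \<union> Q) = ?C P \<union> ?C Q"
    by auto
  moreover have "card (?C P \<union> ?C Q) = card (?C P) + card (?C Q)"
    using assms by (intro card_Un_disjoint) auto
  ultimately show ?thesis
    by (simp add: collisions_def)
qed

text \<open>If the \<open>card G\<close> keys of \<open>G\<close> were hashed independently, they would fill an expected
  \<open>e * (1 - (1 - 1 / 2^r)^(card G))\<close> of \<open>e\<close> empty bins; with only \<open>card (h ` G)\<close> distinct hash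
  values they fill \<open>card (h ` G) * e / 2^r\<close>, and the difference is paid for by the collisions
  inside \<open>G\<close>.\<close>

lemma empty_bins_fill_deficit_le:
  fixes e :: real
  assumes H: "H \<in> tab_space c s r" and G: "finite G" and e: "0 \<le> e" "e \<le> 2 ^ r"
  shows "e * (1 - (1 - 1 / 2 ^ r) ^ card G)
    \<le> card (tab_hash c H ` G) * e / 2 ^ r + collisions c H {(x, y)\<in>G \<times> G. x \<noteq> y}"
proof -
  let ?n = "(2::real) ^ r"
  let ?sG = "real (card (tab_hash c H ` G))"
  have "card G \<le> card (tab_hash c H ` G) + card {(x, y)\<in>G \<times> G. x \<noteq> y \<and> tab_hash c H x = tab_hash c H y}"
    by (rule card_le_card_image_add_collisions[OF G])
  also have "{(x, y)\<in>G \<times> G. x \<noteq> y \<and> tab_hash c H x = tab_hash c H y} =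
      {p\<in>{(x, y)\<in>G \<times> G. x \<noteq> y}. tab_hash c H (fst p) = tab_hash c H (snd p)}"
    by auto
  finally have loss: "card G - ?sG \<le> collisions c H {(x, y)\<in>G \<times> G. x \<noteq> y}"
    by (simp add: collisions_def)
  have "e * (1 - (1 - 1 / ?n) ^ card G) \<le> e * (card G / ?n)"
    using e Bernoulli_inequality[of "- 1 / ?n" "card G"] by (intro mult_left_mono) auto
  also have "\<dots> \<le> ?sG * e / ?n + (card G - ?sG)"
  proof -
    have "e * (card G - ?sG) \<le> ?n * (card G - ?sG)"
      using e card_image_le[OF G, of "tab_hash c H"] by (intro mult_right_mono) auto
    then show ?thesis
      by (simp add: field_simps)
  qed
  finally show ?thesis
    using loss by linarith
qed

lemma empty_bins_upper_mgf_step: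
  fixes v :: real
  assumes ia: "i < c" "a < s" and G: "G \<subseteq> keys c s" "\<forall>y\<in>G. y i = a"
    and Y: "Y \<subseteq> keys c s" "\<forall>y\<in>Y. y i \<noteq> a" and "0 \<le> v" and P: "P \<subseteq> Y \<times> Y"
    and mgf: "tab_mgf_bound c s r
      (\<lambda>H. empty_bins c r H Y - 2 ^ r * (1 - 1 / 2 ^ r) ^ card Y - collisions c H P) v"
  shows "tab_mgf_bound c s r
    (\<lambda>H. empty_bins c r H (Y \<union> G) - 2 ^ r * (1 - 1 / 2 ^ r) ^ (card Y + card G)
       - collisions c H (P \<union> {(x, y)\<in>G \<times> G. x \<noteq> y}))
    ((real (card G))\<^sup>2 + v)"
proof -
  let ?n = "(2::real) ^ r"
  let ?q = "1 - 1 / ?n"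
  let ?PG = "{(x, y)\<in>G \<times> G. x \<noteq> y}"
  define Z where "Z H = card G - real (card (tab_hash c H ` G - tab_hash c H ` Y))" for H
  have fin: "finite G" "finite Y"
    using G Y finite_keys finite_subset by blast+
  have "finite P" "finite ?PG" "P \<inter> ?PG = {}"
    using P fin G(2) Y(2) by (auto intro: finite_subset)
  note collisions_split = collisions_Un[OF this, of c]
  have "0 \<le> ?q" "?q \<le> 1"
    by (simp_all add: field_simps)
  then have q: "0 \<le> ?q ^ card G" "?q ^ card G \<le> 1"
    by (simp_all add: power_le_one)
  show ?thesis
  proof (rule tab_mgf_bound_resample_step[OF ia q \<open>0 \<le> v\<close> mgf, where Y = Z])
    fix H u
    have "collisions c (tab_upd H i a u) P = collisions c H P"
      unfolding collisions_def using P Y(2)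
      by (intro arg_cong[where f = "\<lambda>A. real (card A)"] Collect_cong conj_cong refl)
         (auto simp: tab_hash_tab_upd_other)
    then show "empty_bins c r (tab_upd H i a u) Y - ?n * ?q ^ card Y - collisions c (tab_upd H i a u) P
        = empty_bins c r H Y - ?n * ?q ^ card Y - collisions c H P"
      using Y(2) by (simp add: empty_bins_def tab_hash_image_tab_upd_other)
  next
    fix H
    assume H: "H \<in> tab_space c s r"
    let ?sG = "real (card (tab_hash c H ` G))"
    let ?e = "empty_bins c r H Y"
    have "card (tab_hash c H ` G - tab_hash c H ` Y) \<le> card G"
      using fin(1) by (rule card_image_diff_le)
    then show "0 \<le> Z H \<and> Z H \<le> real (card G)"
      by (simp add: Z_def)
    have "?e * (1 - ?q ^ card G) \<le> ?sG * ?e / ?n + collisions c H ?PG"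
      using empty_bins_nonneg[OF H Y(1)]
      by (intro empty_bins_fill_deficit_le[OF H fin(1)]) (simp_all add: empty_bins_def)
    moreover have "0 \<le> (1 - ?q ^ card G) * collisions c H P"
      using q by (simp add: collisions_nonneg)
    moreover have "collisions c H (P \<union> ?PG) = collisions c H P + collisions c H ?PG"
      by (rule collisions_split)
    moreover have "empty_bins c r H (Y \<union> G) = ?e - card (tab_hash c H ` G - tab_hash c H ` Y)"
      by (rule empty_bins_Un[OF fin(2,1)])
    moreover have "Z H = card G - real (card (tab_hash c H ` G - tab_hash c H ` Y))"
      by (simp add: Z_def)
    moreover have "(\<Sum>u<2 ^ r. Z (tab_upd H i a u)) / 2 ^ r = card G - ?sG * ?e / ?n"
    proof -
      have "(\<Sum>u<(2::nat) ^ r. Z (tab_upd H i a u)) = ?n * card G -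
          (\<Sum>u<(2::nat) ^ r. real (card (tab_hash c (tab_upd H i a u) ` G - tab_hash c (tab_upd H i a u) ` Y)))"
        by (simp add: Z_def sum_subtractf)
      then show ?thesis
        using average_new_bins_resample[OF H ia G Y] by (simp add: diff_divide_distrib)
    qed
    ultimately show "empty_bins c r H (Y \<union> G) - ?n * ?q ^ (card Y + card G) - collisions c H (P \<union> ?PG) \<le>
        ?q ^ card G * (?e - ?n * ?q ^ card Y - collisions c H P) + (Z H - (\<Sum>u<2 ^ r. Z (tab_upd H i a u)) / 2 ^ r)"
      by (simp add: power_add algebra_simps)
  qed
qed

text \<open>The same induction as for \<open>empty_bins_lower_mgf\<close>; the pairs inside the peeled groups are
  collected in \<open>P\<close>.\<close>

lemma empty_bins_upper_mgf:
  assumes "c \<ge> 1"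
  shows "X \<subseteq> keys c s \<Longrightarrow> \<exists>P. P \<subseteq> {(x, y)\<in>X \<times> X. x \<noteq> y} \<and> card P \<le> card X powr (2 - 1 / c) \<and>
     tab_mgf_bound c s r
       (\<lambda>H. empty_bins c r H X - 2 ^ r * (1 - 1 / 2 ^ r) ^ card X - collisions c H P)
       (card X powr (2 - 1 / c))"
proof (induction "card X" arbitrary: X rule: less_induct)
  case less
  let ?n = "(2::real) ^ r"
  let ?q = "1 - 1 / ?n"
  let ?b = "2 - 1 / real c"
  show ?case
  proof (cases "X = {}")
    case True
    have "tab_mgf_bound c s r
        (\<lambda>H. empty_bins c r H X - ?n * ?q ^ card X - collisions c H {}) (card X powr ?b)"
      by (rule tab_mgf_bound_nonpos) (simp_all add: True empty_bins_def collisions_def)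
    then show ?thesis
      using True by (intro exI[of _ "{}"]) simp
  next
    case False
    obtain i a G Y where ia: "i < c" "a < s" and X: "X = Y \<union> G"
      and G: "G \<subseteq> keys c s" "\<forall>y\<in>G. y i = a" and Y: "Y \<subseteq> keys c s" "\<forall>y\<in>Y. y i \<noteq> a"
      and card_X: "card X = card Y + card G" and smaller: "card Y < card X"
      and budget: "(real (card G))\<^sup>2 + real (card Y) powr ?b \<le> real (card X) powr ?b"
      using small_char_group_split[OF assms less.prems False] .
    obtain P where P: "P \<subseteq> {(x, y)\<in>Y \<times> Y. x \<noteq> y}" "card P \<le> card Y powr ?b"
      and mgf: "tab_mgf_bound c s r
        (\<lambda>H. empty_bins c r H Y - ?n * ?q ^ card Y - collisions c H P) (card Y powr ?b)"
      using less.hyps[OF smaller Y(1)] by blast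
    define PG where "PG = {(x, y)\<in>G \<times> G. x \<noteq> y}"
    have "P \<union> PG \<subseteq> {(x, y)\<in>X \<times> X. x \<noteq> y}"
      using P(1) X by (auto simp: PG_def)
    moreover have "card (P \<union> PG) \<le> card X powr ?b"
    proof -
      have "finite G"
        using G(1) finite_keys finite_subset by blast
      then have "card PG \<le> card (G \<times> G)"
        unfolding PG_def by (intro card_mono) auto
      then have "real (card (P \<union> PG)) \<le> card P + (real (card G))\<^sup>2"
        using card_Un_le[of P PG] by (simp add: card_cartesian_product power2_eq_square flip: of_nat_mult)
      then show ?thesis
        using P(2) budget by linarith
    qed
    moreover have "tab_mgf_bound c s r
        (\<lambda>H. empty_bins c r H X - ?n * ?q ^ card X - collisions c H (P \<union> PG))
        ((real (card G))\<^sup>2 + card Y powr ?b)"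
      unfolding PG_def card_X unfolding X using P(1)
      by (intro empty_bins_upper_mgf_step[OF ia G Y _ _ mgf]) auto
    then have "tab_mgf_bound c s r
        (\<lambda>H. empty_bins c r H X - ?n * ?q ^ card X - collisions c H (P \<union> PG)) (card X powr ?b)"
      by (rule tab_mgf_bound_mono[OF _ budget])
    ultimately show ?thesis
      by blast
  qed
qed

section \<open>Pairs and quadruples of collisions\<close>

lemma card_xor_shift_zero:
  fixes D :: "(nat \<Rightarrow> nat \<Rightarrow> nat) \<Rightarrow> nat" and Q :: "(nat \<Rightarrow> nat \<Rightarrow> nat) \<Rightarrow> bool"
  assumes ia: "i < c" "a < s"
    and shift: "\<And>H u. D (tab_upd H i a u) = xor (D (tab_upd H i a 0)) u"
    and less: "\<And>H. H \<in> tab_space c s r \<Longrightarrow> D H < 2 ^ r"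
    and inv: "\<And>H u. H \<in> tab_space c s r \<Longrightarrow> u < 2 ^ r \<Longrightarrow> Q (tab_upd H i a u) = Q H"
  shows "real (card {H\<in>tab_space c s r. D H = 0 \<and> Q H}) * 2 ^ r = card {H\<in>tab_space c s r. Q H}"
proof -
  let ?T = "tab_space c s r"
  have "real (card {H\<in>?T. D H = 0 \<and> Q H}) * 2 ^ r = (\<Sum>H\<in>?T. of_bool (D H = 0 \<and> Q H)) * 2 ^ r"
    by (simp add: finite_tab_space Int_def)
  also have "\<dots> = (\<Sum>H\<in>?T. \<Sum>u<2 ^ r. of_bool (D (tab_upd H i a u) = 0 \<and> Q (tab_upd H i a u)))"
    by (rule sum_tab_space_resample[OF ia])
  also have "\<dots> = (\<Sum>H\<in>?T. of_bool (Q H))"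
  proof (rule sum.cong)
    fix H
    assume H: "H \<in> ?T"
    define d where "d = D (tab_upd H i a 0)"
    have "d < 2 ^ r"
      unfolding d_def by (rule less[OF tab_upd_in_tab_space[OF H ia]]) simp
    have "D (tab_upd H i a u) = xor d u" for u
      unfolding d_def by (rule shift)
    then have "(\<Sum>u<(2::nat) ^ r. of_bool (D (tab_upd H i a u) = 0 \<and> Q (tab_upd H i a u)) :: real) =
        (\<Sum>u<(2::nat) ^ r. if d = u then of_bool (Q H) else 0)"
      using inv[OF H] by (intro sum.cong) (auto simp: xor_eq_0_iff)
    also have "\<dots> = of_bool (Q H)"
      using \<open>d < 2 ^ r\<close> by (simp add: sum.delta)
    finally show "(\<Sum>u<(2::nat) ^ r. of_bool (D (tab_upd H i a u) = 0 \<and> Q (tab_upd H i a u)) :: real) =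
        of_bool (Q H)" .
  qed simp
  also have "\<dots> = card {H\<in>?T. Q H}"
    by (simp add: finite_tab_space Int_def)
  finally show ?thesis .
qed

lemma xor_tab_hash_tab_upd:
  assumes "i < c" "(x i = a) \<noteq> (y i = a)"
  shows "xor (tab_hash c (tab_upd H i a u) x) (tab_hash c (tab_upd H i a u) y) =
    xor (xor (tab_hash c (tab_upd H i a 0) x) (tab_hash c (tab_upd H i a 0) y)) u"
proof (cases "x i = a")
  case True
  then have "\<not> (i < c \<and> y i = a)"
    using assms(2) by auto
  then have "tab_hash c (tab_upd H i a v) y = tab_hash c H y" for v
    by (rule tab_hash_tab_upd_other)
  moreover have "tab_hash c (tab_upd H i a u) x = xor (tab_hash c (tab_upd H i a 0) x) u"
    using assms(1) True by (rule tab_hash_tab_upd_same)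
  ultimately show ?thesis
    by (simp only: xor.assoc xor.commute xor.left_commute)
next
  case False
  then have "\<not> (i < c \<and> x i = a)" "y i = a"
    using assms(2) by auto
  then have "tab_hash c (tab_upd H i a v) x = tab_hash c H x" for v
    by (intro tab_hash_tab_upd_other)
  moreover have "tab_hash c (tab_upd H i a u) y = xor (tab_hash c (tab_upd H i a 0) y) u"
    using assms(1) \<open>y i = a\<close> by (rule tab_hash_tab_upd_same)
  ultimately show ?thesis
    by (simp only: xor.assoc)
qed

lemma tab_hash_eq_tab_upd_iff:
  assumes H: "H \<in> tab_space c s r" and "(x i = a) = (y i = a)"
  shows "tab_hash c (tab_upd H i a u) x = tab_hash c (tab_upd H i a u) y \<longleftrightarrow> tab_hash c H x = tab_hash c H y"
proof (cases "i < c \<and> x i = a")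
  case True
  have "tab_hash c (tab_upd H i a v) x = tab_hash c (tab_upd H i a v) y \<longleftrightarrow>
      tab_hash c (tab_upd H i a 0) x = tab_hash c (tab_upd H i a 0) y" for v
  proof -
    have "tab_hash c (tab_upd H i a v) x = xor (tab_hash c (tab_upd H i a 0) x) v"
      "tab_hash c (tab_upd H i a v) y = xor (tab_hash c (tab_upd H i a 0) y) v"
      using True assms(2) tab_hash_tab_upd_same[of i c _ a H v] by simp_all
    then show ?thesis
      by (simp add: xor_eq_xor_iff)
  qed
  from this[of u] this[of "H i a"] show ?thesis
    by (simp add: tab_upd_entry[OF H])
next
  case False
  then show ?thesis
    using assms(2) by (simp add: tab_hash_tab_upd_other)
qed

text \<open>A collision of \<open>x\<close> and \<open>y\<close> is independent of every event that does not see the entry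
  \<open>H i a\<close> used by exactly one of the two keys.\<close>

lemma card_collision_indep:
  assumes "x \<in> keys c s" "y \<in> keys c s" and ia: "i < c" "a < s" and "(x i = a) \<noteq> (y i = a)"
    and inv: "\<And>H u. H \<in> tab_space c s r \<Longrightarrow> u < 2 ^ r \<Longrightarrow> Q (tab_upd H i a u) = Q H"
  shows "real (card {H\<in>tab_space c s r. tab_hash c H x = tab_hash c H y \<and> Q H}) * 2 ^ r
    = card {H\<in>tab_space c s r. Q H}"
proof -
  have "real (card {H\<in>tab_space c s r. xor (tab_hash c H x) (tab_hash c H y) = 0 \<and> Q H}) * 2 ^ r
      = card {H\<in>tab_space c s r. Q H}"
  proof (rule card_xor_shift_zero[OF ia])
    fix H u
    show "xor (tab_hash c (tab_upd H i a u) x) (tab_hash c (tab_upd H i a u) y) =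
        xor (xor (tab_hash c (tab_upd H i a 0) x) (tab_hash c (tab_upd H i a 0) y)) u"
      using assms(3,5) by (rule xor_tab_hash_tab_upd)
  next
    fix H
    assume "H \<in> tab_space c s r"
    then show "xor (tab_hash c H x) (tab_hash c H y) < 2 ^ r"
      using assms(1,2) by (intro xor_less_power tab_hash_less)
  qed (rule inv)
  then show ?thesis
    by (simp add: xor_eq_0_iff)
qed

lemma card_collision:
  assumes "x \<in> keys c s" "y \<in> keys c s" "x \<noteq> y"
  shows "real (card {H\<in>tab_space c s r. tab_hash c H x = tab_hash c H y}) * 2 ^ r = card (tab_space c s r)"
proof -
  have "\<exists>i<c. x i \<noteq> y i"
  proof (rule ccontr)
    assume "\<not> ?thesis"
    then have "x = y"
      using assms(1,2) unfolding keys_def by (intro PiE_ext) auto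
    with assms(3) show False ..
  qed
  then obtain i where i: "i < c" "x i \<noteq> y i"
    by blast
  have "x i < s"
    using assms(1) i(1) by (auto simp: keys_def PiE_iff)
  then show ?thesis
    using card_collision_indep[OF assms(1,2) i(1), where a = "x i" and Q = "\<lambda>_. True" and r = r] i(2) by simp
qed

text \<open>\<open>pairs_up p q v w\<close>: the four characters \<open>p, q, v, w\<close> are matched in pairs, i.e.\ no
  character occurs an odd number of times among them.\<close>

definition pairs_up :: "nat \<Rightarrow> nat \<Rightarrow> nat \<Rightarrow> nat \<Rightarrow> bool" where
  "pairs_up p q v w \<longleftrightarrow> (p = q \<and> v = w) \<or> (p = v \<and> q = w) \<or> (p = w \<and> q = v)"

lemma pairs_up_swap: "pairs_up p q v w = pairs_up p v q w" "pairs_up p q v w = pairs_up p w v q"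
  unfolding pairs_up_def by auto

definition quad_dependent ::
    "nat \<Rightarrow> (nat \<Rightarrow> nat) \<Rightarrow> (nat \<Rightarrow> nat) \<Rightarrow> (nat \<Rightarrow> nat) \<Rightarrow> (nat \<Rightarrow> nat) \<Rightarrow> bool" where
  "quad_dependent c x y z w \<longleftrightarrow> (\<forall>i<c. pairs_up (x i) (y i) (z i) (w i))"

lemma not_pairs_up_odd_char:
  assumes "\<not> pairs_up p q v w"
  shows "\<exists>a\<in>{p, q, v, w}. ((p = a) \<noteq> (q = a) \<and> (v = a) = (w = a)) \<or>
                            ((v = a) \<noteq> (w = a) \<and> (p = a) = (q = a))"
  using assms unfolding pairs_up_def by auto

lemma card_two_collisions:
  assumes "x \<in> keys c s" "y \<in> keys c s" "x \<noteq> y" "z \<in> keys c s" "w \<in> keys c s" "z \<noteq> w"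
    and "\<not> quad_dependent c x y z w"
  shows "real (card {H\<in>tab_space c s r. tab_hash c H x = tab_hash c H y \<and> tab_hash c H z = tab_hash c H w})
    * 2 ^ r * 2 ^ r = card (tab_space c s r)"
proof -
  let ?T = "tab_space c s r"
  obtain i where i: "i < c" "\<not> pairs_up (x i) (y i) (z i) (w i)"
    using assms(7) unfolding quad_dependent_def by blast
  then obtain a where "a \<in> {x i, y i, z i, w i}"
    and a: "((x i = a) \<noteq> (y i = a) \<and> (z i = a) = (w i = a)) \<or>
            ((z i = a) \<noteq> (w i = a) \<and> (x i = a) = (y i = a))"
    using not_pairs_up_odd_char by blast
  moreover have "x i < s" "y i < s" "z i < s" "w i < s"
    using assms i by (auto simp: keys_def PiE_iff)
  ultimately have "a < s"
    by blast
  from a consider "(x i = a) \<noteq> (y i = a)" "(z i = a) = (w i = a)"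
    | "(z i = a) \<noteq> (w i = a)" "(x i = a) = (y i = a)"
    by blast
  then show ?thesis
  proof cases
    case 1
    then show ?thesis
      using card_collision_indep[OF assms(1,2) i(1) \<open>a < s\<close>, where Q = "\<lambda>H. tab_hash c H z = tab_hash c H w" and r = r]
        card_collision[OF assms(4-6), of r]
      by (simp add: tab_hash_eq_tab_upd_iff)
  next
    case 2
    then show ?thesis
      using card_collision_indep[OF assms(4,5) i(1) \<open>a < s\<close>, where Q = "\<lambda>H. tab_hash c H x = tab_hash c H y" and r = r]
        card_collision[OF assms(1-3), of r]
      by (simp add: tab_hash_eq_tab_upd_iff conj_commute)
  qed
qed

lemma sum_collision_indicator:
  assumes "x \<in> keys c s" "y \<in> keys c s" "x \<noteq> y"
  shows "(\<Sum>H\<in>tab_space c s r. of_bool (tab_hash c H x = tab_hash c H y)) = card (tab_space c s r) / 2 ^ r"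
  using card_collision[OF assms, of r] by (simp add: finite_tab_space Int_def field_simps)

lemma sum_collision_indicator_pair_le:
  assumes "x \<in> keys c s" "y \<in> keys c s" "x \<noteq> y" "z \<in> keys c s" "w \<in> keys c s" "z \<noteq> w"
  shows "(\<Sum>H\<in>tab_space c s r. of_bool (tab_hash c H x = tab_hash c H y) * of_bool (tab_hash c H z = tab_hash c H w))
    \<le> (if quad_dependent c x y z w then card (tab_space c s r) / 2 ^ r else card (tab_space c s r) / 2 ^ r / 2 ^ r)"
proof -
  let ?T = "tab_space c s r"
  have "(\<Sum>H\<in>?T. of_bool (tab_hash c H x = tab_hash c H y) * of_bool (tab_hash c H z = tab_hash c H w))
      = real (card {H\<in>?T. tab_hash c H x = tab_hash c H y \<and> tab_hash c H z = tab_hash c H w})"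
    by (simp add: finite_tab_space Int_def of_bool_conj)
  also have "\<dots> \<le> (if quad_dependent c x y z w then card ?T / 2 ^ r else card ?T / 2 ^ r / 2 ^ r)"
  proof (cases "quad_dependent c x y z w")
    case True
    have "card {H\<in>?T. tab_hash c H x = tab_hash c H y \<and> tab_hash c H z = tab_hash c H w}
        \<le> card {H\<in>?T. tab_hash c H x = tab_hash c H y}"
      by (intro card_mono finite_subset[OF _ finite_tab_space]) auto
    then have "real (card {H\<in>?T. tab_hash c H x = tab_hash c H y \<and> tab_hash c H z = tab_hash c H w}) * 2 ^ r
        \<le> real (card {H\<in>?T. tab_hash c H x = tab_hash c H y}) * 2 ^ r"
      by simp
    also have "\<dots> = card ?T"
      by (rule card_collision[OF assms(1-3)])
    finally show ?thesis
      using True by (simp add: field_simps)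
  next
    case False
    then show ?thesis
      using card_two_collisions[OF assms False, of r] by (simp add: field_simps)
  qed
  finally show ?thesis .
qed

text \<open>Only pairs of pairs that are \<open>quad_dependent\<close> contribute to the variance: all other pairs of
  collision events are independent by \<open>card_two_collisions\<close>.\<close>

lemma sum_collisions_sq_dev_le:
  assumes P: "P \<subseteq> {(x, y)\<in>X \<times> X. x \<noteq> y}" and X: "X \<subseteq> keys c s"
  shows "(\<Sum>H\<in>tab_space c s r. (collisions c H P - card P / 2 ^ r)\<^sup>2)
    \<le> real (card (tab_space c s r)) * card {(p, q)\<in>P \<times> P. quad_dependent c (fst p) (snd p) (fst q) (snd q)} / 2 ^ r"
proof -
  let ?T = "tab_space c s r"
  let ?n = "(2::real) ^ r"
  let ?N = "real (card ?T)"
  let ?I = "\<lambda>H p. of_bool (tab_hash c H (fst p) = tab_hash c H (snd p)) :: real"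
  let ?dep = "\<lambda>p q. quad_dependent c (fst p) (snd p) (fst q) (snd q)"
  have "finite X"
    using X finite_keys finite_subset by blast
  then have finP: "finite P"
    using P by (auto intro: finite_subset[of _ "X \<times> X"])
  have keys: "fst p \<in> keys c s" "snd p \<in> keys c s" "fst p \<noteq> snd p" if "p \<in> P" for p
    using subsetD[OF P that] X by (auto split: prod.splits)
  have coll: "collisions c H P = (\<Sum>p\<in>P. ?I H p)" for H
    using finP by (simp add: collisions_def Int_def)
  have "(\<Sum>H\<in>?T. (collisions c H P)\<^sup>2) = (\<Sum>p\<in>P. \<Sum>q\<in>P. \<Sum>H\<in>?T. ?I H p * ?I H q)"
    by (simp add: coll power2_eq_square sum_product sum.swap[of _ ?T])
  also have "\<dots> \<le> (\<Sum>p\<in>P. \<Sum>q\<in>P. (if ?dep p q then ?N / ?n else 0) + ?N / ?n / ?n)"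
  proof (intro sum_mono)
    fix p q
    assume "p \<in> P" "q \<in> P"
    then show "(\<Sum>H\<in>?T. ?I H p * ?I H q) \<le> (if ?dep p q then ?N / ?n else 0) + ?N / ?n / ?n"
      using sum_collision_indicator_pair_le[OF keys[OF \<open>p \<in> P\<close>] keys[OF \<open>q \<in> P\<close>], of r]
      by (cases "?dep p q") (auto intro: add_increasing2)
  qed
  also have "\<dots> = (\<Sum>pq\<in>P \<times> P. if ?dep (fst pq) (snd pq) then ?N / ?n else 0) + (card P)\<^sup>2 * ?N / ?n / ?n"
    by (simp add: sum.distrib sum.cartesian_product case_prod_beta power2_eq_square)
  also have "(\<Sum>pq\<in>P \<times> P. if ?dep (fst pq) (snd pq) then ?N / ?n else 0) =
      card {pq\<in>P \<times> P. ?dep (fst pq) (snd pq)} * (?N / ?n)"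
    using finP by (simp add: sum.If_cases Int_def)
  also have "{pq\<in>P \<times> P. ?dep (fst pq) (snd pq)} = {(p, q)\<in>P \<times> P. ?dep p q}"
    by auto
  finally have sq: "(\<Sum>H\<in>?T. (collisions c H P)\<^sup>2) \<le>
      card {(p, q)\<in>P \<times> P. ?dep p q} * (?N / ?n) + (card P)\<^sup>2 * ?N / ?n / ?n" .
  have "(\<Sum>H\<in>?T. collisions c H P) = (\<Sum>p\<in>P. \<Sum>H\<in>?T. ?I H p)"
    unfolding coll by (rule sum.swap)
  also have "\<dots> = (\<Sum>p\<in>P. ?N / ?n)"
    using sum_collision_indicator[OF keys] by (intro sum.cong) auto
  finally have lin: "(\<Sum>H\<in>?T. collisions c H P) = card P * ?N / ?n"
    by simp
  have "(\<Sum>H\<in>?T. (collisions c H P - card P / ?n)\<^sup>2) =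
      (\<Sum>H\<in>?T. (collisions c H P)\<^sup>2) - 2 * (card P / ?n) * (\<Sum>H\<in>?T. collisions c H P) + ?N * (card P / ?n)\<^sup>2"
    by (simp add: power2_diff sum.distrib sum_subtractf sum_distrib_left sum_divide_distrib algebra_simps)
  also have "\<dots> \<le> card {(p, q)\<in>P \<times> P. ?dep p q} * (?N / ?n)"
  proof -
    have "2 * (card P / ?n) * (card P * ?N / ?n) = 2 * ((card P)\<^sup>2 * ?N / ?n / ?n)"
      "?N * (card P / ?n)\<^sup>2 = (card P)\<^sup>2 * ?N / ?n / ?n"
      by (simp_all add: power2_eq_square)
    then show ?thesis
      using sq unfolding lin by linarith
  qed
  finally show ?thesis
    by (simp add: field_simps)
qed

section \<open>Counting dependent quadruples\<close>

definition determined_on :: "nat set \<Rightarrow> (nat \<Rightarrow> nat) set \<Rightarrow> bool" where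
  "determined_on J X \<longleftrightarrow> finite X \<and> inj_on (\<lambda>x. restrict x J) X"

definition paired_quads :: "nat set \<Rightarrow> (nat \<Rightarrow> nat) set \<Rightarrow> (nat \<Rightarrow> nat) set \<Rightarrow> (nat \<Rightarrow> nat) set \<Rightarrow>
    (nat \<Rightarrow> nat) set \<Rightarrow> ((nat \<Rightarrow> nat) \<times> (nat \<Rightarrow> nat) \<times> (nat \<Rightarrow> nat) \<times> (nat \<Rightarrow> nat)) set" where
  "paired_quads J X1 X2 X3 X4 = {(x, y, z, w). x \<in> X1 \<and> y \<in> X2 \<and> z \<in> X3 \<and> w \<in> X4 \<and>
     (\<forall>i\<in>J. pairs_up (x i) (y i) (z i) (w i))}"

lemma finite_paired_quads:
  "finite X1 \<Longrightarrow> finite X2 \<Longrightarrow> finite X3 \<Longrightarrow> finite X4 \<Longrightarrow> finite (paired_quads J X1 X2 X3 X4)"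
  by (rule finite_subset[of _ "X1 \<times> X2 \<times> X3 \<times> X4"]) (auto simp: paired_quads_def)

lemma determined_on_fibre:
  assumes "determined_on (insert j J) X"
  shows "determined_on J {x\<in>X. x j = b}"
  unfolding determined_on_def
proof (intro conjI inj_onI)
  show "finite {x\<in>X. x j = b}"
    using assms by (simp add: determined_on_def)
  fix x y
  assume xy: "x \<in> {x\<in>X. x j = b}" "y \<in> {x\<in>X. x j = b}" "restrict x J = restrict y J"
  then have "restrict x (insert j J) = restrict y (insert j J)"
    by (auto simp: restrict_def fun_eq_iff dest: fun_cong[of _ _ j] split: if_splits)
  then show "x = y"
    using assms xy by (auto simp: determined_on_def dest: inj_onD)
qed

lemma card_le_1_if_determined_on_empty: "determined_on {} X \<Longrightarrow> card X \<le> 1"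
  unfolding determined_on_def by (auto simp: card_le_Suc0_iff_eq inj_on_def restrict_def)

lemma sum_sqrt_mult_le:
  fixes f g :: "'a \<Rightarrow> real"
  assumes "\<And>x. x \<in> A \<Longrightarrow> 0 \<le> f x" "\<And>x. x \<in> A \<Longrightarrow> 0 \<le> g x"
  shows "(\<Sum>x\<in>A. sqrt (f x * g x)) \<le> sqrt (sum f A) * sqrt (sum g A)"
proof -
  have "(\<Sum>x\<in>A. sqrt (f x) * sqrt (g x))\<^sup>2 \<le> (\<Sum>x\<in>A. (sqrt (f x))\<^sup>2) * (\<Sum>x\<in>A. (sqrt (g x))\<^sup>2)"
    by (rule Cauchy_Schwarz_ineq_sum)
  also have "\<dots> = sum f A * sum g A"
    using assms by simp
  finally have "(\<Sum>x\<in>A. sqrt (f x) * sqrt (g x)) \<le> sqrt (sum f A * sum g A)"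
    by (rule real_le_rsqrt)
  then show ?thesis
    by (simp add: real_sqrt_mult)
qed

lemma sum_card_fibres_le:
  assumes "finite X" "finite B"
  shows "(\<Sum>b\<in>B. real (card {x\<in>X. f x = b})) \<le> card X"
proof -
  have "(\<Sum>b\<in>B. card {x\<in>X. f x = b}) = card (\<Union>b\<in>B. {x\<in>X. f x = b})"
    by (rule card_UN_disjoint[symmetric]) (use assms in auto)
  also have "\<dots> \<le> card X"
    by (rule card_mono) (use assms in auto)
  finally show ?thesis
    by (simp flip: of_nat_sum)
qed

text \<open>Grouping the quadruples by the shared characters \<open>b = x j = y j\<close> and \<open>d = z j = w j\<close>, the
  count splits into a double sum over fibres, and Cauchy--Schwarz in \<open>b\<close> and in \<open>d\<close> brings back
  \<open>sqrt (card X1 * card X2)\<close> and \<open>sqrt (card X3 * card X4)\<close>.\<close>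

lemma card_paired_quads_same_pair_le:
  fixes K :: real
  assumes IH: "\<And>Y1 Y2 Y3 Y4. determined_on J Y1 \<Longrightarrow> determined_on J Y2 \<Longrightarrow> determined_on J Y3 \<Longrightarrow>
      determined_on J Y4 \<Longrightarrow>
      card (paired_quads J Y1 Y2 Y3 Y4) \<le> K * sqrt (real (card Y1) * real (card Y2) * real (card Y3) * real (card Y4))"
    and "0 \<le> K"
    and X: "determined_on (insert j J) X1" "determined_on (insert j J) X2"
      "determined_on (insert j J) X3" "determined_on (insert j J) X4"
  shows "card {(x, y, z, w)\<in>paired_quads J X1 X2 X3 X4. x j = y j \<and> z j = w j}
    \<le> K * sqrt (real (card X1) * real (card X2) * real (card X3) * real (card X4))"
proof -
  define F where "F X b = {x\<in>X. x j = b}" for X :: "(nat \<Rightarrow> nat) set" and b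
  define B1 where "B1 = (\<lambda>x. x j) ` X1"
  define B3 where "B3 = (\<lambda>x. x j) ` X3"
  have fin: "finite X1" "finite X2" "finite X3" "finite X4"
    using X by (simp_all add: determined_on_def)
  then have finB: "finite B1" "finite B3"
    by (simp_all add: B1_def B3_def)
  have F: "determined_on J (F X b)" if "determined_on (insert j J) X" for X b
    unfolding F_def using that by (rule determined_on_fibre)
  have fin_quads: "finite (paired_quads J (F X1 b) (F X2 b) (F X3 d) (F X4 d))" for b d
    using F[OF X(1)] F[OF X(2)] F[OF X(3)] F[OF X(4)]
    by (intro finite_paired_quads) (simp_all add: determined_on_def)
  have "{(x, y, z, w)\<in>paired_quads J X1 X2 X3 X4. x j = y j \<and> z j = w j}
      \<subseteq> (\<Union>b\<in>B1. \<Union>d\<in>B3. paired_quads J (F X1 b) (F X2 b) (F X3 d) (F X4 d))"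
    by (fastforce simp: paired_quads_def F_def B1_def B3_def)
  then have "card {(x, y, z, w)\<in>paired_quads J X1 X2 X3 X4. x j = y j \<and> z j = w j}
      \<le> card (\<Union>b\<in>B1. \<Union>d\<in>B3. paired_quads J (F X1 b) (F X2 b) (F X3 d) (F X4 d))"
    using finB fin_quads by (intro card_mono) auto
  also have "\<dots> \<le> (\<Sum>b\<in>B1. \<Sum>d\<in>B3. card (paired_quads J (F X1 b) (F X2 b) (F X3 d) (F X4 d)))"
    using finB by (intro order_trans[OF card_UN_le] sum_mono card_UN_le) auto
  finally have "card {(x, y, z, w)\<in>paired_quads J X1 X2 X3 X4. x j = y j \<and> z j = w j}
      \<le> (\<Sum>b\<in>B1. \<Sum>d\<in>B3. real (card (paired_quads J (F X1 b) (F X2 b) (F X3 d) (F X4 d))))"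
    by (simp flip: of_nat_sum)
  also have "\<dots> \<le> (\<Sum>b\<in>B1. \<Sum>d\<in>B3. K * (sqrt (real (card (F X1 b)) * real (card (F X2 b))) *
                                           sqrt (real (card (F X3 d)) * real (card (F X4 d)))))"
    using IH F X by (intro sum_mono) (simp add: real_sqrt_mult[symmetric] mult.assoc)
  also have "\<dots> = K * ((\<Sum>b\<in>B1. sqrt (real (card (F X1 b)) * real (card (F X2 b)))) *
                        (\<Sum>d\<in>B3. sqrt (real (card (F X3 d)) * real (card (F X4 d)))))"
    by (subst sum_product) (simp add: sum_distrib_left)
  also have "\<dots> \<le> K * ((sqrt (card X1) * sqrt (card X2)) * (sqrt (card X3) * sqrt (card X4)))"
  proof (intro mult_left_mono mult_mono \<open>0 \<le> K\<close>)
    show "(\<Sum>b\<in>B1. sqrt (real (card (F X1 b)) * real (card (F X2 b)))) \<le> sqrt (card X1) * sqrt (card X2)"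
      using sum_card_fibres_le[OF _ finB(1)] fin
      by (intro order_trans[OF sum_sqrt_mult_le] mult_mono real_sqrt_le_mono)
         (auto simp: F_def intro: sum_nonneg)
    show "(\<Sum>d\<in>B3. sqrt (real (card (F X3 d)) * real (card (F X4 d)))) \<le> sqrt (card X3) * sqrt (card X4)"
      using sum_card_fibres_le[OF _ finB(2)] fin
      by (intro order_trans[OF sum_sqrt_mult_le] mult_mono real_sqrt_le_mono)
         (auto simp: F_def intro: sum_nonneg)
  qed (auto intro: sum_nonneg)
  also have "\<dots> = K * sqrt (real (card X1) * real (card X2) * real (card X3) * real (card X4))"
    by (simp add: real_sqrt_mult mult_ac)
  finally show ?thesis .
qed

lemma paired_quads_insert_subset:
  "paired_quads (insert j J) X1 X2 X3 X4 \<subseteq>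
     {(x, y, z, w)\<in>paired_quads J X1 X2 X3 X4. x j = y j \<and> z j = w j} \<union>
     (\<lambda>(x, z, y, w). (x, y, z, w)) ` {(x, z, y, w)\<in>paired_quads J X1 X3 X2 X4. x j = z j \<and> y j = w j} \<union>
     (\<lambda>(x, w, z, y). (x, y, z, w)) ` {(x, w, z, y)\<in>paired_quads J X1 X4 X3 X2. x j = w j \<and> z j = y j}"
    (is "_ \<subseteq> ?A \<union> ?swap2 ` ?B \<union> ?swap3 ` ?C")
proof
  fix q
  assume "q \<in> paired_quads (insert j J) X1 X2 X3 X4"
  then obtain x y z w where q: "q = (x, y, z, w)" "x \<in> X1" "y \<in> X2" "z \<in> X3" "w \<in> X4"
    and j: "pairs_up (x j) (y j) (z j) (w j)" and J: "\<forall>i\<in>J. pairs_up (x i) (y i) (z i) (w i)"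
    by (auto simp: paired_quads_def)
  have J': "\<forall>i\<in>J. pairs_up (x i) (z i) (y i) (w i)" "\<forall>i\<in>J. pairs_up (x i) (w i) (z i) (y i)"
    using J by (simp_all add: pairs_up_swap)
  from j consider "x j = y j \<and> z j = w j" | "x j = z j \<and> y j = w j" | "x j = w j \<and> y j = z j"
    unfolding pairs_up_def by blast
  then show "q \<in> ?A \<union> ?swap2 ` ?B \<union> ?swap3 ` ?C"
  proof cases
    case 1
    then show ?thesis
      using q J by (simp add: paired_quads_def)
  next
    case 2
    then have "(x, z, y, w) \<in> ?B"
      using q J' by (simp add: paired_quads_def)
    then show ?thesis
      unfolding q(1) by (auto intro!: image_eqI[where x = "(x, z, y, w)"])
  next
    case 3
    then have "(x, w, z, y) \<in> ?C"
      using q J' by (simp add: paired_quads_def)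
    then show ?thesis
      unfolding q(1) by (auto intro!: image_eqI[where x = "(x, w, z, y)"])
  qed
qed

text \<open>At a new position one of the three alternatives of \<open>pairs_up\<close> holds; the second and
  third reduce to the first by permuting \<open>y, z, w\<close>.\<close>

lemma card_paired_quads_le:
  assumes "finite J"
  shows "determined_on J X1 \<Longrightarrow> determined_on J X2 \<Longrightarrow> determined_on J X3 \<Longrightarrow> determined_on J X4 \<Longrightarrow>
    card (paired_quads J X1 X2 X3 X4)
      \<le> 3 ^ card J * sqrt (real (card X1) * real (card X2) * real (card X3) * real (card X4))"
  using assms
proof (induction J arbitrary: X1 X2 X3 X4 rule: finite_induct)
  case empty
  let ?prod = "card X1 * card X2 * card X3 * card X4"
  have "card (paired_quads {} X1 X2 X3 X4) \<le> card (X1 \<times> X2 \<times> X3 \<times> X4)"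
    using empty.prems by (intro card_mono) (auto simp: paired_quads_def determined_on_def)
  then have "card (paired_quads {} X1 X2 X3 X4) \<le> ?prod"
    by (simp add: card_cartesian_product mult.assoc)
  then have "real (card (paired_quads {} X1 X2 X3 X4)) \<le> real ?prod"
    by (simp only: of_nat_le_iff)
  moreover have "?prod \<le> 1 * 1 * 1 * 1"
    using empty.prems by (intro mult_le_mono card_le_1_if_determined_on_empty)
  then have "sqrt (real ?prod) = ?prod"
    by (auto simp: le_Suc_eq)
  ultimately show ?case
    by simp
next
  case (insert j J)
  let ?sqrt = "\<lambda>X1 X2 X3 X4. sqrt (real (card X1) * real (card X2) * real (card X3) * real (card X4))"
  let ?same = "\<lambda>X1 X2 X3 X4. {(x, y, z, w)\<in>paired_quads J X1 X2 X3 X4. x j = y j \<and> z j = w j}"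
  have same: "card (?same Y1 Y2 Y3 Y4) \<le> 3 ^ card J * ?sqrt Y1 Y2 Y3 Y4"
    if "determined_on (insert j J) Y1" "determined_on (insert j J) Y2"
      "determined_on (insert j J) Y3" "determined_on (insert j J) Y4" for Y1 Y2 Y3 Y4
    using insert.IH by (intro card_paired_quads_same_pair_le that) auto
  have fin: "finite (?same Y1 Y2 Y3 Y4)"
    if "determined_on (insert j J) Y1" "determined_on (insert j J) Y2"
      "determined_on (insert j J) Y3" "determined_on (insert j J) Y4" for Y1 Y2 Y3 Y4
    using that by (intro finite_subset[OF _ finite_paired_quads]) (auto simp: determined_on_def)
  have "card (paired_quads (insert j J) X1 X2 X3 X4) \<le> card (?same X1 X2 X3 X4 \<union>
      (\<lambda>(x, z, y, w). (x, y, z, w)) ` ?same X1 X3 X2 X4 \<union> (\<lambda>(x, w, z, y). (x, y, z, w)) ` ?same X1 X4 X3 X2)"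
    using insert.prems fin by (intro card_mono paired_quads_insert_subset) auto
  also have "\<dots> \<le> card (?same X1 X2 X3 X4) + card ((\<lambda>(x, z, y, w). (x, y, z, w)) ` ?same X1 X3 X2 X4) +
      card ((\<lambda>(x, w, z, y). (x, y, z, w)) ` ?same X1 X4 X3 X2)"
    by (rule order_trans[OF card_Un_le add_right_mono[OF card_Un_le]])
  also have "\<dots> \<le> card (?same X1 X2 X3 X4) + card (?same X1 X3 X2 X4) + card (?same X1 X4 X3 X2)"
    using insert.prems by (intro add_mono card_image_le fin le_refl)
  finally have "card (paired_quads (insert j J) X1 X2 X3 X4) \<le>
      real (card (?same X1 X2 X3 X4)) + card (?same X1 X3 X2 X4) + card (?same X1 X4 X3 X2)"
    by linarith
  also have "\<dots> \<le> 3 ^ card J * ?sqrt X1 X2 X3 X4 + 3 ^ card J * ?sqrt X1 X3 X2 X4 + 3 ^ card J * ?sqrt X1 X4 X3 X2"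
    using insert.prems by (intro add_mono same) auto
  also have "\<dots> = 3 ^ card (insert j J) * ?sqrt X1 X2 X3 X4"
    using insert.hyps by (simp add: mult_ac)
  finally show ?case .
qed

lemma card_quad_dependent_le:
  assumes X: "X \<subseteq> keys c s" and P: "P \<subseteq> {(x, y)\<in>X \<times> X. x \<noteq> y}"
  shows "card {(p, q)\<in>P \<times> P. quad_dependent c (fst p) (snd p) (fst q) (snd q)} \<le> 3 ^ c * (real (card X))\<^sup>2"
proof -
  let ?D = "{(p, q)\<in>P \<times> P. quad_dependent c (fst p) (snd p) (fst q) (snd q)}"
  let ?flat = "\<lambda>(p, q). (fst p, snd p, fst q, snd q)"
  have finX: "finite X"
    using X finite_keys finite_subset by blast
  have det: "determined_on {..<c} X"
    unfolding determined_on_def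
  proof (intro conjI inj_onI finX)
    fix x y
    assume xy: "x \<in> X" "y \<in> X" "restrict x {..<c} = restrict y {..<c}"
    moreover have "restrict x {..<c} = x" "restrict y {..<c} = y"
      using xy(1,2) X unfolding keys_def by (auto simp: PiE_def extensional_restrict)
    ultimately show "x = y"
      by simp
  qed
  have "card ?D = card (?flat ` ?D)"
    by (rule card_image[symmetric]) (auto simp: inj_on_def prod_eq_iff)
  also have "\<dots> \<le> card (paired_quads {..<c} X X X X)"
    using P finX by (intro card_mono finite_paired_quads) (auto simp: paired_quads_def quad_dependent_def)
  finally have "card ?D \<le> real (card (paired_quads {..<c} X X X X))"
    by simp
  also have "\<dots> \<le> 3 ^ c * sqrt (real (card X) * real (card X) * real (card X) * real (card X))"
    using card_paired_quads_le[OF _ det det det det] by simp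
  also have "sqrt (real (card X) * real (card X) * real (card X) * real (card X)) = (real (card X))\<^sup>2"
    by (simp add: real_sqrt_mult power2_eq_square)
  finally show ?thesis .
qed

section \<open>Tail bounds\<close>

lemma tab_prob_le_1: "tab_prob c s r P \<le> 1"
  unfolding tab_prob_def using card_tab_space_pos[of c s r]
  by (simp add: card_mono[OF finite_tab_space])

lemma tab_prob_mono:
  "(\<And>H. H \<in> tab_space c s r \<Longrightarrow> P H \<Longrightarrow> Q H) \<Longrightarrow> tab_prob c s r P \<le> tab_prob c s r Q"
  unfolding tab_prob_def
  by (intro divide_right_mono of_nat_mono card_mono) (auto intro: finite_subset[OF _ finite_tab_space])

lemma tab_prob_eq_0:
  assumes "\<And>H. H \<in> tab_space c s r \<Longrightarrow> \<not> P H"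
  shows "tab_prob c s r P = 0"
proof -
  have "{H\<in>tab_space c s r. P H} = {}"
    using assms by blast
  then show ?thesis
    unfolding tab_prob_def by (simp only:) simp
qed

lemma tab_prob_disj_le:
  assumes "\<And>H. H \<in> tab_space c s r \<Longrightarrow> P H \<Longrightarrow> Q H \<or> R H"
  shows "tab_prob c s r P \<le> tab_prob c s r Q + tab_prob c s r R"
proof -
  let ?T = "tab_space c s r"
  have "card {H\<in>?T. P H} \<le> card ({H\<in>?T. Q H} \<union> {H\<in>?T. R H})"
    using assms by (intro card_mono) (auto intro: finite_subset[OF _ finite_tab_space])
  also have "\<dots> \<le> card {H\<in>?T. Q H} + card {H\<in>?T. R H}"
    by (rule card_Un_le)
  finally show ?thesis
    unfolding tab_prob_def add_divide_distrib[symmetric] by (intro divide_right_mono) simp_all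
qed

lemma mu0_pow2: "mu0 (2 ^ r) m = 2 ^ r - 2 ^ r * (1 - 1 / 2 ^ r) ^ m"
  by (simp add: mu0_def algebra_simps)

lemma mu0_bounds: "0 \<le> mu0 (2 ^ r) m" "mu0 (2 ^ r) m \<le> 2 ^ r"
proof -
  have "0 \<le> (1 - 1 / 2 ^ r :: real) ^ m" "(1 - 1 / 2 ^ r :: real) ^ m \<le> 1"
    by (simp_all add: power_le_one)
  then show "0 \<le> mu0 (2 ^ r) m" "mu0 (2 ^ r) m \<le> 2 ^ r"
    unfolding mu0_pow2 by (simp_all add: mult_left_le)
qed

text \<open>Outside the range of the Chernoff argument the claimed bound exceeds \<open>1\<close>.\<close>

lemma one_le_two_exp:
  fixes t n v :: real
  assumes "0 \<le> t" "2 * t \<le> n" "v = 0 \<or> t * n < 2 * v"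
  shows "1 \<le> 2 * exp (- (t\<^sup>2) / (2 * v))"
proof (cases "v = 0")
  case False
  with assms have "t * n < 2 * v"
    by simp
  moreover have "t * t \<le> t * n / 2"
    using mult_left_mono[of t "n / 2" t] assms by simp
  moreover have "0 \<le> t * t"
    using assms(1) by simp
  ultimately have "t\<^sup>2 \<le> v" "v > 0"
    unfolding power2_eq_square by linarith+
  then have "t\<^sup>2 / (2 * v) \<le> 1 / 2"
    by (simp add: field_simps)
  then show ?thesis
    using exp_ge_add_one_self[of "- (t\<^sup>2 / (2 * v))"] by simp
qed simp

lemma exp_le_two_exp_quarter:
  fixes t v :: real
  assumes "0 < v"
  shows "exp (- 2 * t\<^sup>2 / v) \<le> 2 * exp (- (t\<^sup>2) / (2 * v))"
proof -
  have "t\<^sup>2 / (2 * v) \<le> 2 * t\<^sup>2 / v"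
    using assms by (intro frac_le) auto
  then have "exp (- 2 * t\<^sup>2 / v) \<le> exp (- (t\<^sup>2) / (2 * v))"
    by simp
  then show ?thesis
    using exp_gt_zero[of "- (t\<^sup>2) / (2 * v)"] by linarith
qed

lemma card_hash_image_upper_tail:
  assumes "c \<ge> 1" "X \<subseteq> keys c s" "0 \<le> t"
  shows "tab_prob c s r (\<lambda>H. real (card (tab_hash c H ` X)) \<ge> mu0 (2 ^ r) (card X) + 2 * t)
    \<le> 2 * exp (- (t\<^sup>2) / (2 * card X powr (2 - 1 / c)))"
    (is "tab_prob c s r ?event \<le> 2 * exp (- (t\<^sup>2) / (2 * ?v))")
proof -
  let ?n = "(2::real) ^ r"
  consider (large) "?n < 2 * t" | (trivial) "2 * t \<le> ?n" "?v = 0 \<or> t * ?n < 2 * ?v"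
    | (main) "0 < ?v" "2 * ?v \<le> t * ?n"
    by fastforce
  then show ?thesis
  proof cases
    case large
    have "tab_prob c s r ?event = 0"
    proof (rule tab_prob_eq_0)
      fix H
      assume "H \<in> tab_space c s r"
      then show "\<not> ?event H"
        using empty_bins_nonneg[of H c s r X] assms mu0_bounds(1)[of r "card X"] large
        unfolding empty_bins_def by linarith
    qed
    then show ?thesis
      by simp
  next
    case trivial
    then show ?thesis
      using one_le_two_exp[of t ?n ?v] tab_prob_le_1[of c s r ?event] assms(3) by linarith
  next
    case main
    obtain p where "2 ^ r * ((1 - 1 / 2 ^ r) ^ card X - p) \<le> ?v / 2 ^ r"
      and mgf: "tab_mgf_bound c s r (\<lambda>H. 2 ^ r * p - empty_bins c r H X) ?v"
      using empty_bins_lower_mgf[OF assms(1,2)] by blast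
    moreover have "?v \<le> t * ?n"
      using main by linarith
    then have "?v / ?n \<le> t"
      by (simp add: field_simps)
    ultimately have "tab_prob c s r ?event \<le> tab_prob c s r (\<lambda>H. t \<le> 2 ^ r * p - empty_bins c r H X)"
      by (intro tab_prob_mono) (simp add: mu0_pow2 empty_bins_def algebra_simps)
    also have "\<dots> \<le> exp (- 2 * t\<^sup>2 / ?v)"
      using tab_prob_ge_le_exp[OF mgf main(1) assms(3)] .
    also have "\<dots> \<le> 2 * exp (- (t\<^sup>2) / (2 * ?v))"
      using main by (intro exp_le_two_exp_quarter) simp
    finally show ?thesis .
  qed
qed

lemma tab_prob_collisions_ge_le:
  fixes t :: real
  assumes X: "X \<subseteq> keys c s" and P: "P \<subseteq> {(x, y)\<in>X \<times> X. x \<noteq> y}"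
    and t: "0 < t" "2 * card P \<le> t * 2 ^ r"
  shows "tab_prob c s r (\<lambda>H. t \<le> collisions c H P) \<le> 4 * 3 ^ c * (real (card X))\<^sup>2 / (2 ^ r * t\<^sup>2)"
proof -
  let ?T = "tab_space c s r"
  let ?n = "(2::real) ^ r"
  define \<mu> where "\<mu> = card P / ?n"
  have "t / 2 \<le> t - \<mu>"
    using t by (simp add: \<mu>_def field_simps)
  then have "t\<^sup>2 / 4 \<le> (t - \<mu>)\<^sup>2"
    using t power_mono[of "t / 2" "t - \<mu>" 2] by (simp add: power_divide)
  then have "card {H\<in>?T. t \<le> collisions c H P} * (t\<^sup>2 / 4) \<le> card {H\<in>?T. t \<le> collisions c H P} * (t - \<mu>)\<^sup>2"
    by (intro mult_left_mono) auto
  also have "\<dots> = (\<Sum>H\<in>{H\<in>?T. t \<le> collisions c H P}. (t - \<mu>)\<^sup>2)"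
    by simp
  also have "\<dots> \<le> (\<Sum>H\<in>{H\<in>?T. t \<le> collisions c H P}. (collisions c H P - \<mu>)\<^sup>2)"
    using \<open>t / 2 \<le> t - \<mu>\<close> t by (intro sum_mono power_mono) auto
  also have "\<dots> \<le> (\<Sum>H\<in>?T. (collisions c H P - \<mu>)\<^sup>2)"
    by (intro sum_mono2 finite_tab_space) auto
  also have "\<dots> \<le> real (card ?T) * card {(p, q)\<in>P \<times> P. quad_dependent c (fst p) (snd p) (fst q) (snd q)} / ?n"
    unfolding \<mu>_def by (rule sum_collisions_sq_dev_le[OF P X])
  also have "\<dots> \<le> real (card ?T) * (3 ^ c * (real (card X))\<^sup>2) / ?n"
    by (intro divide_right_mono mult_left_mono card_quad_dependent_le[OF X P]) auto
  finally show ?thesis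
    using t(1) card_tab_space_pos[of c s r] by (simp add: tab_prob_def field_simps)
qed

lemma card_hash_image_lower_tail:
  assumes "c \<ge> 1" "X \<subseteq> keys c s" "0 \<le> t"
  shows "tab_prob c s r (\<lambda>H. real (card (tab_hash c H ` X)) \<le> mu0 (2 ^ r) (card X) - 2 * t)
    \<le> 2 * exp (- (t\<^sup>2) / (2 * card X powr (2 - 1 / c))) + 4 * 3 ^ c * (real (card X))\<^sup>2 / (2 ^ r * t\<^sup>2)"
    (is "tab_prob c s r ?event \<le> 2 * exp (- (t\<^sup>2) / (2 * ?v)) + ?R")
proof -
  let ?n = "(2::real) ^ r"
  have "0 \<le> ?R"
    by simp
  consider (large) "?n < 2 * t" | (trivial) "2 * t \<le> ?n" "?v = 0 \<or> t * ?n < 2 * ?v"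
    | (main) "0 < ?v" "2 * ?v \<le> t * ?n"
    by fastforce
  then show ?thesis
  proof cases
    case large
    have "tab_prob c s r ?event = 0"
      using mu0_bounds(2)[of r "card X"] large by (intro tab_prob_eq_0) simp
    then show ?thesis
      using \<open>0 \<le> ?R\<close> by simp
  next
    case trivial
    then show ?thesis
      using one_le_two_exp[of t ?n ?v] tab_prob_le_1[of c s r ?event] assms(3) \<open>0 \<le> ?R\<close> by linarith
  next
    case main
    then have "0 < t"
      using assms(3) by (cases "t = 0") auto
    obtain P where P: "P \<subseteq> {(x, y)\<in>X \<times> X. x \<noteq> y}" "card P \<le> ?v"
      and mgf: "tab_mgf_bound c s r
        (\<lambda>H. empty_bins c r H X - ?n * (1 - 1 / ?n) ^ card X - collisions c H P) ?v"
      using empty_bins_upper_mgf[OF assms(1,2)] by blast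
    have "tab_prob c s r ?event \<le>
        tab_prob c s r (\<lambda>H. t \<le> empty_bins c r H X - ?n * (1 - 1 / ?n) ^ card X - collisions c H P) +
        tab_prob c s r (\<lambda>H. t \<le> collisions c H P)"
      by (intro tab_prob_disj_le) (auto simp: mu0_pow2 empty_bins_def)
    also have "\<dots> \<le> 2 * exp (- (t\<^sup>2) / (2 * ?v)) + ?R"
    proof (rule add_mono)
      show "tab_prob c s r (\<lambda>H. t \<le> empty_bins c r H X - ?n * (1 - 1 / ?n) ^ card X - collisions c H P)
          \<le> 2 * exp (- (t\<^sup>2) / (2 * ?v))"
        using tab_prob_ge_le_exp[OF mgf main(1) assms(3)] exp_le_two_exp_quarter[OF main(1), of t]
        by linarith
      show "tab_prob c s r (\<lambda>H. t \<le> collisions c H P) \<le> ?R"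
        using P main \<open>0 < t\<close> by (intro tab_prob_collisions_ge_le[OF assms(2) P(1)]) auto
    qed
    finally show ?thesis .
  qed
qed

theorem theorem3:
  fixes c :: nat
  assumes "c \<ge> 1"
  shows "\<exists>C>0. \<forall>(s::nat) (r::nat) (X::(nat \<Rightarrow> nat) set) (t::real).
           X \<subseteq> keys c s \<and> t \<ge> 0 \<longrightarrow>
           (let m = card X; n = (2::nat) ^ r;
                E = exp (- (t ^ 2) / (2 * real m powr (2 - 1 / real c))) in
              tab_prob c s r (\<lambda>H. real (card (tab_hash c H ` X)) \<ge> mu0 n m + 2 * t)
                \<le> C * E \<and>
              tab_prob c s r (\<lambda>H. real (card (tab_hash c H ` X)) \<le> mu0 n m - 2 * t)
                \<le> C * (E + real m ^ 2 / (real n * t ^ 2)))"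
proof (intro exI[of _ "4 * 3 ^ c + 2"] conjI allI impI)
  fix s r :: nat and X :: "(nat \<Rightarrow> nat) set" and t :: real
  assume "X \<subseteq> keys c s \<and> t \<ge> 0"
  then have upper: "tab_prob c s r (\<lambda>H. real (card (tab_hash c H ` X)) \<ge> mu0 (2 ^ r) (card X) + 2 * t)
      \<le> 2 * exp (- (t\<^sup>2) / (2 * card X powr (2 - 1 / c)))"
    and lower: "tab_prob c s r (\<lambda>H. real (card (tab_hash c H ` X)) \<le> mu0 (2 ^ r) (card X) - 2 * t)
      \<le> 2 * exp (- (t\<^sup>2) / (2 * card X powr (2 - 1 / c))) + 4 * 3 ^ c * ((real (card X))\<^sup>2 / (2 ^ r * t\<^sup>2))"
    using card_hash_image_upper_tail[OF assms] card_hash_image_lower_tail[OF assms] by auto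
  define E where "E = exp (- (t\<^sup>2) / (2 * card X powr (2 - 1 / c)))"
  define R where "R = (real (card X))\<^sup>2 / (2 ^ r * t\<^sup>2)"
  have "0 \<le> 3 ^ c * E" "0 \<le> R"
    by (simp_all add: E_def R_def)
  then have "2 * E \<le> (4 * 3 ^ c + 2) * E" "2 * E + 4 * 3 ^ c * R \<le> (4 * 3 ^ c + 2) * (E + R)"
    by (simp_all add: distrib_left distrib_right mult.assoc)
  then show "let m = card X; n = (2::nat) ^ r; E = exp (- (t ^ 2) / (2 * real m powr (2 - 1 / real c))) in
      tab_prob c s r (\<lambda>H. real (card (tab_hash c H ` X)) \<ge> mu0 n m + 2 * t) \<le> (4 * 3 ^ c + 2) * E \<and>
      tab_prob c s r (\<lambda>H. real (card (tab_hash c H ` X)) \<le> mu0 n m - 2 * t)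
        \<le> (4 * 3 ^ c + 2) * (E + real m ^ 2 / (real n * t ^ 2))"
    using upper lower unfolding Let_def of_nat_power of_nat_numeral E_def[symmetric] R_def[symmetric]
    by linarith
qed (simp add: add_nonneg_pos)

end
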